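(* Let $G$ and $H$ be graphs, let $H_{ni}$ be the set of non-isolated vertices of $H$, and for $y\in H_{ni}$ let $N_y$ be the induced subgraph of $H$ on the vertices adjacent to $y$. Then $$\mathcal A_{lc}(\Sigma G,H)\cong\bigoplus_{y\in H_{ni}}\mathcal A_{lc}(G,N_y).$$ In particular, if $H$ is vertex transitive and $y$ is any vertex of $H$ with neighborhood $N$, then $\mathcal A_{lc}(\Sigma G,H)\cong\mathcal A_{lc}(G,N)^{|H|}$ (the direct sum of $|V(H)|$ copies).
   Context: Graphs are finite with symmetric edge sets; write $v\sim w$ for adjacency. The suspension $\Sigma G$ is obtained from $G$ by adding one new vertex adjacent to every vertex of $G$. For graphs $G,H$, $\mathcal A_{lc}(G,H)$ is the unital complex algebra generated by $e_{v,x}$ ($v\in V(G)$, $x\in V(H)$) with relations: $\sum_{x}e_{v,x}=1$; $e_{v,x}^2=e_{v,x}$; $e_{v,x}e_{v,y}=0$ for $x\ne y$; $e_{v,x}e_{w,y}=0$ if $v\sim w$ and $x\not\sim y$; $e_{v,x}e_{w,y}=e_{w,y}e_{v,x}$ if $v\sim w$. *)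

theory Defs
  imports Complex_Main
begin

text \<open>A (finite) graph is a finite vertex set V with a symmetric adjacency
relation E supported on V.  Loops are permitted (the paper only requires
symmetric edge sets).\<close>

definition graph :: "'a set \<Rightarrow> ('a \<Rightarrow> 'a \<Rightarrow> bool) \<Rightarrow> bool" where
  "graph V E \<longleftrightarrow> finite V \<and> (\<forall>v w. E v w \<longrightarrow> v \<in> V \<and> w \<in> V \<and> E w v)"

text \<open>Suspension: new vertex None adjacent to every (old) vertex Some v.\<close>

definition susp_V :: "'a set \<Rightarrow> 'a option set" where
  "susp_V V = insert None (Some ` V)"

definition susp_E :: "'a set \<Rightarrow> ('a \<Rightarrow> 'a \<Rightarrow> bool) \<Rightarrow> 'a option \<Rightarrow> 'a option \<Rightarrow> bool" where
  "susp_E V E a b = (case (a, b) of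
       (Some v, Some w) \<Rightarrow> E v w
     | (None, Some w) \<Rightarrow> w \<in> V
     | (Some v, None) \<Rightarrow> v \<in> V
     | (None, None) \<Rightarrow> False)"

definition nbhd_V :: "'b set \<Rightarrow> ('b \<Rightarrow> 'b \<Rightarrow> bool) \<Rightarrow> 'b \<Rightarrow> 'b set" where
  "nbhd_V W F y = {x \<in> W. F y x}"

definition nbhd_E :: "'b set \<Rightarrow> ('b \<Rightarrow> 'b \<Rightarrow> bool) \<Rightarrow> 'b \<Rightarrow> 'b \<Rightarrow> 'b \<Rightarrow> bool" where
  "nbhd_E W F y a b \<longleftrightarrow> F a b \<and> a \<in> nbhd_V W F y \<and> b \<in> nbhd_V W F y"

definition non_isolated :: "'b set \<Rightarrow> ('b \<Rightarrow> 'b \<Rightarrow> bool) \<Rightarrow> 'b set" where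
  "non_isolated W F = {y \<in> W. \<exists>x. F y x}"

definition vertex_transitive :: "'b set \<Rightarrow> ('b \<Rightarrow> 'b \<Rightarrow> bool) \<Rightarrow> bool" where
  "vertex_transitive W F \<longleftrightarrow>
     (\<forall>y\<in>W. \<forall>y'\<in>W. \<exists>\<sigma>. bij_betw \<sigma> W W \<and> (\<forall>a\<in>W. \<forall>b\<in>W. F a b \<longleftrightarrow> F (\<sigma> a) (\<sigma> b)) \<and> \<sigma> y = y')"

text \<open>An element of the free unital complex algebra on generators of type 'g is a
finitely supported function from words to coefficients.\<close>

type_synonym 'g ncpoly = "'g list \<Rightarrow> complex"

definition nc_polys :: "'g set \<Rightarrow> 'g ncpoly set" where
  "nc_polys Gen = {p. finite {w. p w \<noteq> 0} \<and> (\<forall>w. p w \<noteq> 0 \<longrightarrow> set w \<subseteq> Gen)}"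

definition padd :: "'g ncpoly \<Rightarrow> 'g ncpoly \<Rightarrow> 'g ncpoly" where
  "padd p q = (\<lambda>w. p w + q w)"

definition psmul :: "complex \<Rightarrow> 'g ncpoly \<Rightarrow> 'g ncpoly" where
  "psmul c p = (\<lambda>w. c * p w)"

definition pmul :: "'g ncpoly \<Rightarrow> 'g ncpoly \<Rightarrow> 'g ncpoly" where
  "pmul p q = (\<lambda>w. \<Sum>k\<in>{0..length w}. p (take k w) * q (drop k w))"

definition pone :: "'g ncpoly" where
  "pone = (\<lambda>w. if w = [] then 1 else 0)"

definition pgen :: "'g \<Rightarrow> 'g ncpoly" where
  "pgen g = (\<lambda>w. if w = [g] then 1 else 0)"

definition psub :: "'g ncpoly \<Rightarrow> 'g ncpoly \<Rightarrow> 'g ncpoly" where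
  "psub p q = (\<lambda>w. p w - q w)"

inductive_set ideal_gen :: "'g ncpoly set \<Rightarrow> 'g ncpoly set \<Rightarrow> 'g ncpoly set"
  for C R where
  zero: "(\<lambda>_. 0) \<in> ideal_gen C R"
| gen: "r \<in> R \<Longrightarrow> a \<in> C \<Longrightarrow> b \<in> C \<Longrightarrow> pmul (pmul a r) b \<in> ideal_gen C R"
| add: "p \<in> ideal_gen C R \<Longrightarrow> q \<in> ideal_gen C R \<Longrightarrow> padd p q \<in> ideal_gen C R"

text \<open>An algebra presented as a quotient: a carrier of representatives, an ideal
(representatives of zero), and the algebra operations on representatives.\<close>

record 'e qalg =
  carr :: "'e set"
  idl :: "'e set"
  plus :: "'e \<Rightarrow> 'e \<Rightarrow> 'e"
  mult :: "'e \<Rightarrow> 'e \<Rightarrow> 'e"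
  scal :: "complex \<Rightarrow> 'e \<Rightarrow> 'e"
  unit :: "'e"

definition qsub :: "('e, 'm) qalg_scheme \<Rightarrow> 'e \<Rightarrow> 'e \<Rightarrow> 'e" where
  "qsub A a b = plus A a (scal A (-1) b)"

definition presented :: "'g set \<Rightarrow> 'g ncpoly set \<Rightarrow> 'g ncpoly qalg" where
  "presented Gen R = \<lparr> carr = nc_polys Gen, idl = ideal_gen (nc_polys Gen) R,
      plus = padd, mult = pmul, scal = psmul, unit = pone \<rparr>"

text \<open>Isomorphism of unital complex algebras C1/I1 and C2/I2, expressed on
representatives: a map that is well defined and injective modulo the ideals,
surjective modulo the ideal, and a unital complex-algebra homomorphism modulo
the ideal.\<close>

definition qalg_iso :: "'e qalg \<Rightarrow> 'f qalg \<Rightarrow> bool" where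
  "qalg_iso A B \<longleftrightarrow> (\<exists>\<phi>.
     (\<forall>a\<in>carr A. \<phi> a \<in> carr B) \<and>
     (\<forall>a\<in>carr A. \<forall>b\<in>carr A. qsub A a b \<in> idl A \<longleftrightarrow> qsub B (\<phi> a) (\<phi> b) \<in> idl B) \<and>
     (\<forall>b\<in>carr B. \<exists>a\<in>carr A. qsub B (\<phi> a) b \<in> idl B) \<and>
     (\<forall>a\<in>carr A. \<forall>b\<in>carr A. qsub B (\<phi> (plus A a b)) (plus B (\<phi> a) (\<phi> b)) \<in> idl B) \<and>
     (\<forall>a\<in>carr A. \<forall>b\<in>carr A. qsub B (\<phi> (mult A a b)) (mult B (\<phi> a) (\<phi> b)) \<in> idl B) \<and>
     (\<forall>c. \<forall>a\<in>carr A. qsub B (\<phi> (scal A c a)) (scal B c (\<phi> a)) \<in> idl B) \<and>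
     qsub B (\<phi> (unit A)) (unit B) \<in> idl B)"

definition dsum :: "'y set \<Rightarrow> ('y \<Rightarrow> 'e qalg) \<Rightarrow> ('y \<Rightarrow> 'e) qalg" where
  "dsum S A = \<lparr>
     carr = {f. (\<forall>y\<in>S. f y \<in> carr (A y)) \<and> (\<forall>y. y \<notin> S \<longrightarrow> f y = undefined)},
     idl = {f. (\<forall>y\<in>S. f y \<in> idl (A y)) \<and> (\<forall>y. y \<notin> S \<longrightarrow> f y = undefined)},
     plus = (\<lambda>f g y. if y \<in> S then plus (A y) (f y) (g y) else undefined),
     mult = (\<lambda>f g y. if y \<in> S then mult (A y) (f y) (g y) else undefined),
     scal = (\<lambda>c f y. if y \<in> S then scal (A y) c (f y) else undefined),
     unit = (\<lambda>y. if y \<in> S then unit (A y) else undefined) \<rparr>"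

definition lc_rels :: "'a set \<Rightarrow> ('a \<Rightarrow> 'a \<Rightarrow> bool) \<Rightarrow> 'b set \<Rightarrow> ('b \<Rightarrow> 'b \<Rightarrow> bool)
    \<Rightarrow> ('a \<times> 'b) ncpoly set" where
  "lc_rels V E W F =
     {psub (\<lambda>u. \<Sum>x\<in>W. pgen (v, x) u) pone | v. v \<in> V}
   \<union> {psub (pmul (pgen (v, x)) (pgen (v, x))) (pgen (v, x)) | v x. v \<in> V \<and> x \<in> W}
   \<union> {pmul (pgen (v, x)) (pgen (v, y)) | v x y. v \<in> V \<and> x \<in> W \<and> y \<in> W \<and> x \<noteq> y}
   \<union> {pmul (pgen (v, x)) (pgen (w, y)) | v w x y.
        v \<in> V \<and> w \<in> V \<and> x \<in> W \<and> y \<in> W \<and> E v w \<and> \<not> F x y}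
   \<union> {psub (pmul (pgen (v, x)) (pgen (w, y))) (pmul (pgen (w, y)) (pgen (v, x))) | v w x y.
        v \<in> V \<and> w \<in> V \<and> x \<in> W \<and> y \<in> W \<and> E v w}"

definition A_lc :: "'a set \<Rightarrow> ('a \<Rightarrow> 'a \<Rightarrow> bool) \<Rightarrow> 'b set \<Rightarrow> ('b \<Rightarrow> 'b \<Rightarrow> bool)
    \<Rightarrow> ('a \<times> 'b) ncpoly qalg" where
  "A_lc V E W F = presented (V \<times> W) (lc_rels V E W F)"

end

theory Submission
  imports Defs
begin

text \<open>Let p_y = e_{*,y} be the generators of the apex * of \<Sigma>G. Since * is adjacent to every
vertex of G, each p_y commutes with all e_{v,x}, and p_y e_{v,x} = 0 unless x is a neighbour
of y. The p_y are orthogonal idempotents summing to 1, so A_lc(\<Sigma>G,H) is the direct sum of the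
corners p_y A_lc(\<Sigma>G,H). For isolated y the corner vanishes, because
p_y = p_y \<Sum>_x e_{v,x} = 0 for any vertex v of G. For the other y, the substitution
e_{v,x} \<mapsto> e_{v,x} (x \<in> N_y), e_{v,x} \<mapsto> 0 (x \<notin> N_y), e_{*,x} \<mapsto> \<delta>_{xy} respects all relations
and is inverted on the corner by e_{v,x} \<mapsto> p_y e_{v,x}; this identifies the corner with
A_lc(G,N_y).\<close>

section \<open>Noncommutative polynomials\<close>

abbreviation pzero :: "'g ncpoly" where "pzero \<equiv> (\<lambda>_. 0)"

lemma pmul_Nil: "pmul p q [] = p [] * q []"
  by (simp add: pmul_def)
lemma pmul_Cons: "pmul p q (a#w) = p [] * q (a#w) + pmul (\<lambda>u. p (a#u)) q w"
  unfolding pmul_def length_Cons sum.atLeast0_atMost_Suc_shift by simp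

lemma pmul_padd_left: "pmul (padd p q) r = padd (pmul p r) (pmul q r)"
  by (rule ext) (simp add: pmul_def padd_def sum.distrib algebra_simps)
lemma pmul_padd_right: "pmul r (padd p q) = padd (pmul r p) (pmul r q)"
  by (rule ext) (simp add: pmul_def padd_def sum.distrib algebra_simps)
lemma pmul_psmul_left: "pmul (psmul c p) r = psmul c (pmul p r)"
  by (rule ext) (simp add: pmul_def psmul_def sum_distrib_left algebra_simps)
lemma pmul_psmul_right: "pmul r (psmul c p) = psmul c (pmul r p)"
  by (rule ext) (simp add: pmul_def psmul_def sum_distrib_left algebra_simps)
lemma pmul_psub_left: "pmul (psub p q) r = psub (pmul p r) (pmul q r)"
  by (rule ext) (simp add: pmul_def psub_def sum_subtractf algebra_simps)
lemma pmul_psub_right: "pmul r (psub p q) = psub (pmul r p) (pmul r q)"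
  by (rule ext) (simp add: pmul_def psub_def sum_subtractf algebra_simps)
lemma psub_self[simp]: "psub p p = pzero" by (rule ext) (simp add: psub_def)
lemma pmul_zero_left[simp]: "pmul pzero r = pzero"
  by (rule ext) (simp add: pmul_def)
lemma pmul_zero_right[simp]: "pmul r pzero = pzero"
  by (rule ext) (simp add: pmul_def)
lemma pmul_sum_left: "pmul (\<lambda>w. \<Sum>i\<in>S. f i w) r = (\<lambda>w. \<Sum>i\<in>S. pmul (f i) r w)"
  by (rule ext) (simp add: pmul_def sum_distrib_right, rule sum.swap)
lemma pmul_sum_right: "pmul r (\<lambda>w. \<Sum>i\<in>S. f i w) = (\<lambda>w. \<Sum>i\<in>S. pmul r (f i) w)"
  by (rule ext) (simp add: pmul_def sum_distrib_left, rule sum.swap)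

lemma pmul_pone_left[simp]: "pmul pone q = q"
proof (rule ext)
  fix w show "pmul pone q w = q w"
  proof (cases w)
    case Nil then show ?thesis by (simp add: pmul_Nil pone_def)
  next
    case (Cons a w')
    have "(\<lambda>u. pone (a#u)) = pzero" by (simp add: pone_def)
    then show ?thesis using Cons by (simp add: pmul_Cons pone_def)
  qed
qed

lemma pmul_pone_right[simp]: "pmul q pone = q"
proof (rule ext)
  fix w show "pmul q pone w = q w"
  proof (induction w arbitrary: q)
    case Nil then show ?case by (simp add: pmul_Nil pone_def)
  next
    case (Cons a w)
    then show ?case by (simp add: pmul_Cons pone_def)
  qed
qed

lemma pmul_lincomb_left: "pmul (\<lambda>u. c * p u + q u) r w = c * pmul p r w + pmul q r w"
  by (simp add: pmul_def sum.distrib sum_distrib_left algebra_simps)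

lemma pmul_assoc: "pmul (pmul p q) r = pmul p (pmul q r)"
proof (rule ext)
  fix w show "pmul (pmul p q) r w = pmul p (pmul q r) w"
  proof (induction w arbitrary: p)
    case Nil then show ?case by (simp add: pmul_Nil)
  next
    case (Cons a w)
    have e: "(\<lambda>u. pmul p q (a#u)) = (\<lambda>u. p [] * q (a#u) + pmul (\<lambda>u. p (a#u)) q u)"
      by (simp add: pmul_Cons)
    show ?case
      by (simp add: pmul_Cons e pmul_lincomb_left Cons pmul_Nil algebra_simps)
  qed
qed

definition pmon :: "'g list \<Rightarrow> 'g ncpoly" where
  "pmon u = (\<lambda>w. if w = u then 1 else 0)"

lemma pmon_Nil: "pmon [] = pone" by (simp add: pmon_def pone_def)

lemma pmul_pgen: "pmul (pgen a) q = (\<lambda>w. case w of [] \<Rightarrow> 0 | b#w' \<Rightarrow> if b = a then q w' else 0)"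
proof (rule ext)
  fix w show "pmul (pgen a) q w = (case w of [] \<Rightarrow> 0 | b#w' \<Rightarrow> if b = a then q w' else 0)"
  proof (cases w)
    case Nil then show ?thesis by (simp add: pmul_Nil pgen_def)
  next
    case (Cons b w')
    have "(\<lambda>u. pgen a (b#u)) = (if b = a then pone else pzero)"
      by (auto simp: pgen_def pone_def)
    then show ?thesis using Cons by (simp add: pmul_Cons pgen_def)
  qed
qed

lemma pmon_Cons: "pmon (a#u) = pmul (pgen a) (pmon u)"
  by (rule ext) (auto simp: pmul_pgen pmon_def split: list.split)

lemma pmul_pmon: "pmul (pmon u) (pmon v) = pmon (u @ v)"
  by (induction u) (simp_all add: pmon_Nil pmon_Cons pmul_assoc)

lemma nc_polysI: "finite {w. p w \<noteq> 0} \<Longrightarrow> (\<And>w. p w \<noteq> 0 \<Longrightarrow> set w \<subseteq> G) \<Longrightarrow> p \<in> nc_polys G"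
  by (auto simp: nc_polys_def)
lemma nc_polys_finite: "p \<in> nc_polys G \<Longrightarrow> finite {w. p w \<noteq> 0}"
  by (auto simp: nc_polys_def)
lemma nc_polys_words: "p \<in> nc_polys G \<Longrightarrow> p w \<noteq> 0 \<Longrightarrow> set w \<subseteq> G"
  by (auto simp: nc_polys_def)
lemma nc_polys_mono: "p \<in> nc_polys G \<Longrightarrow> G \<subseteq> G' \<Longrightarrow> p \<in> nc_polys G'"
  by (auto simp: nc_polys_def)

lemma pzero_nc[simp]: "pzero \<in> nc_polys G" by (auto simp: nc_polys_def)
lemma pone_nc[simp]: "pone \<in> nc_polys G" by (auto simp: nc_polys_def pone_def)
lemma pgen_nc: "a \<in> G \<Longrightarrow> pgen a \<in> nc_polys G" by (auto simp: nc_polys_def pgen_def)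
lemma pmon_nc: "set u \<subseteq> G \<Longrightarrow> pmon u \<in> nc_polys G" by (auto simp: nc_polys_def pmon_def)

lemma padd_nc: "p \<in> nc_polys G \<Longrightarrow> q \<in> nc_polys G \<Longrightarrow> padd p q \<in> nc_polys G"
proof (rule nc_polysI)
  assume a: "p \<in> nc_polys G" "q \<in> nc_polys G"
  have "{w. padd p q w \<noteq> 0} \<subseteq> {w. p w \<noteq> 0} \<union> {w. q w \<noteq> 0}" by (auto simp: padd_def)
  moreover have "finite ({w. p w \<noteq> 0} \<union> {w. q w \<noteq> 0})" using nc_polys_finite[OF a(1)] nc_polys_finite[OF a(2)] by simp
  ultimately show "finite {w. padd p q w \<noteq> 0}" by (rule finite_subset)
  fix w assume "padd p q w \<noteq> 0" then have "p w \<noteq> 0 \<or> q w \<noteq> 0" by (auto simp: padd_def)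
  then show "set w \<subseteq> G" using nc_polys_words[OF a(1)] nc_polys_words[OF a(2)] by blast
qed
lemma psmul_nc: "p \<in> nc_polys G \<Longrightarrow> psmul c p \<in> nc_polys G"
proof (rule nc_polysI)
  assume a: "p \<in> nc_polys G"
  have "{w. psmul c p w \<noteq> 0} \<subseteq> {w. p w \<noteq> 0}" by (auto simp: psmul_def)
  then show "finite {w. psmul c p w \<noteq> 0}" using a nc_polys_finite finite_subset by blast
  fix w assume "psmul c p w \<noteq> 0" then have "p w \<noteq> 0" by (auto simp: psmul_def)
  then show "set w \<subseteq> G" using nc_polys_words[OF a] by blast
qed
lemma psub_nc: "p \<in> nc_polys G \<Longrightarrow> q \<in> nc_polys G \<Longrightarrow> psub p q \<in> nc_polys G"
proof -
  assume a: "p \<in> nc_polys G" "q \<in> nc_polys G"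
  have "psub p q = padd p (psmul (-1) q)" by (rule ext) (simp add: psub_def padd_def psmul_def)
  then show ?thesis using a by (simp add: padd_nc psmul_nc)
qed

lemma pmul_nonzero_split: assumes "pmul p q w \<noteq> 0" shows "\<exists>u v. w = u @ v \<and> p u \<noteq> 0 \<and> q v \<noteq> 0"
proof -
  have "\<exists>k\<in>{0..length w}. p (take k w) * q (drop k w) \<noteq> 0"
  proof (rule ccontr)
    assume "\<not> ?thesis"
    then have "pmul p q w = 0" unfolding pmul_def by (intro sum.neutral) blast
    then show False using assms by simp
  qed
  then obtain k where k: "p (take k w) \<noteq> 0" "q (drop k w) \<noteq> 0" by auto
  show ?thesis
  proof (intro exI conjI)
    show "w = take k w @ drop k w" by (rule append_take_drop_id[symmetric])
  qed (rule k)+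
qed

lemma pmul_nc: assumes a: "p \<in> nc_polys G" "q \<in> nc_polys G" shows "pmul p q \<in> nc_polys G"
proof (rule nc_polysI)
  have "{w. pmul p q w \<noteq> 0} \<subseteq> (\<lambda>(u,v). u @ v) ` ({w. p w \<noteq> 0} \<times> {w. q w \<noteq> 0})"
  proof
    fix w assume "w \<in> {w. pmul p q w \<noteq> 0}"
    then obtain u v where "w = u @ v" "p u \<noteq> 0" "q v \<noteq> 0" using pmul_nonzero_split by blast
    then show "w \<in> (\<lambda>(u,v). u @ v) ` ({w. p w \<noteq> 0} \<times> {w. q w \<noteq> 0})"
      by (intro image_eqI[where x="(u,v)"]) auto
  qed
  moreover have "finite ((\<lambda>(u,v). u @ v) ` ({w. p w \<noteq> 0} \<times> {w. q w \<noteq> 0}))"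
    using finite_imageI[OF finite_cartesian_product[OF nc_polys_finite[OF a(1)] nc_polys_finite[OF a(2)]]] .
  ultimately show "finite {w. pmul p q w \<noteq> 0}" using finite_subset by blast
  fix w assume "pmul p q w \<noteq> 0"
  then obtain u v where "w = u @ v" "p u \<noteq> 0" "q v \<noteq> 0" using pmul_nonzero_split by blast
  moreover have "set u \<subseteq> G" using a(1) \<open>p u \<noteq> 0\<close> by (rule nc_polys_words)
  moreover have "set v \<subseteq> G" using a(2) \<open>q v \<noteq> 0\<close> by (rule nc_polys_words)
  ultimately show "set w \<subseteq> G" by simp
qed

lemma sum_nc: "(\<And>i. i \<in> S \<Longrightarrow> f i \<in> nc_polys G) \<Longrightarrow> (\<lambda>w. \<Sum>i\<in>S. f i w) \<in> nc_polys G"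
proof (induction S rule: infinite_finite_induct)
  case (insert x F)
  have "(\<lambda>w. \<Sum>i\<in>insert x F. f i w) = padd (f x) (\<lambda>w. \<Sum>i\<in>F. f i w)"
    using insert by (simp add: padd_def)
  then show ?case using insert by (simp add: padd_nc)
qed simp_all

lemma nc_polys_induct[consumes 1, case_names zero step]:
  assumes p: "p \<in> nc_polys G" and z: "Q pzero"
    and st: "\<And>p c u. p \<in> nc_polys G \<Longrightarrow> set u \<subseteq> G \<Longrightarrow> Q p \<Longrightarrow> Q (padd p (psmul c (pmon u)))"
  shows "Q p"
proof -
  have "\<forall>p. {w. p w \<noteq> 0} = S \<and> p \<in> nc_polys G \<longrightarrow> Q p" if "finite S" for S
    using that
  proof (induction S rule: finite_induct)
    case empty
    { fix p :: "'a ncpoly" assume "{w. p w \<noteq> 0} = {}" then have "p = pzero" by auto }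
    then show ?case using z by auto
  next
    case (insert u S)
    show ?case
    proof (intro allI impI)
      fix p :: "'a ncpoly" assume h: "{w. p w \<noteq> 0} = insert u S \<and> p \<in> nc_polys G"
      define p' where "p' = p(u := 0)"
      have s: "{w. p' w \<noteq> 0} = S" using h insert(2) by (auto simp: p'_def)
      have "p' \<in> nc_polys G" using h s insert(1) by (auto simp: nc_polys_def p'_def)
      then have "Q p'" using insert s by auto
      moreover have "set u \<subseteq> G" using h by (auto simp: nc_polys_def)
      moreover have "p = padd p' (psmul (p u) (pmon u))"
        by (rule ext) (simp add: p'_def padd_def psmul_def pmon_def)
      ultimately show "Q p" using st \<open>p' \<in> nc_polys G\<close> by metis
    qed
  qed
  then show ?thesis using p nc_polys_finite by blast
qed

section \<open>Generated ideals and congruence modulo them\<close>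

context
  fixes G :: "'g set" and R :: "'g ncpoly set"
begin

abbreviation "Igen \<equiv> ideal_gen (nc_polys G) R"

lemma ideal_gen_psmul: "p \<in> Igen \<Longrightarrow> psmul c p \<in> Igen"
proof (induction rule: ideal_gen.induct)
  case zero then show ?case by (simp add: psmul_def ideal_gen.zero)
next
  case (gen r a b)
  have "psmul c (pmul (pmul a r) b) = pmul (pmul (psmul c a) r) b"
    by (simp add: pmul_psmul_left)
  then show ?case using gen by (simp add: ideal_gen.gen psmul_nc)
next
  case (add p q)
  have "psmul c (padd p q) = padd (psmul c p) (psmul c q)"
    by (rule ext) (simp add: psmul_def padd_def algebra_simps)
  then show ?case using add by (simp add: ideal_gen.add)
qed

lemma ideal_gen_psub: "p \<in> Igen \<Longrightarrow> q \<in> Igen \<Longrightarrow> psub p q \<in> Igen"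
proof -
  assume a: "p \<in> Igen" "q \<in> Igen"
  have "psub p q = padd p (psmul (-1) q)" by (rule ext) (simp add: psub_def padd_def psmul_def)
  then show ?thesis using a by (simp add: ideal_gen.add ideal_gen_psmul)
qed

lemma ideal_gen_pmul_left: assumes "c \<in> nc_polys G" "p \<in> Igen" shows "pmul c p \<in> Igen"
  using assms(2,1) proof (induction rule: ideal_gen.induct)
  case zero then show ?case by (simp add: ideal_gen.zero)
next
  case (gen r a b)
  have "pmul c (pmul (pmul a r) b) = pmul (pmul (pmul c a) r) b"
    by (simp add: pmul_assoc)
  then show ?case using gen by (simp add: ideal_gen.gen pmul_nc)
next
  case (add p q)
  then show ?case by (simp add: pmul_padd_right ideal_gen.add)
qed

lemma ideal_gen_pmul_right: assumes "c \<in> nc_polys G" "p \<in> Igen" shows "pmul p c \<in> Igen"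
  using assms(2,1) proof (induction rule: ideal_gen.induct)
  case zero then show ?case by (simp add: ideal_gen.zero)
next
  case (gen r a b)
  have "pmul (pmul (pmul a r) b) c = pmul (pmul a r) (pmul b c)"
    by (simp add: pmul_assoc)
  then show ?case using gen by (simp add: ideal_gen.gen pmul_nc)
next
  case (add p q)
  then show ?case by (simp add: pmul_padd_left ideal_gen.add)
qed

lemma ideal_gen_rel: "r \<in> R \<Longrightarrow> r \<in> Igen"
  using ideal_gen.gen[of r R pone "nc_polys G" pone] by simp

lemma ideal_gen_sum: "(\<And>i. i \<in> S \<Longrightarrow> f i \<in> Igen) \<Longrightarrow> (\<lambda>w. \<Sum>i\<in>S. f i w) \<in> Igen"
proof (induction S rule: infinite_finite_induct)
  case (insert x F)
  have "(\<lambda>w. \<Sum>i\<in>insert x F. f i w) = padd (f x) (\<lambda>w. \<Sum>i\<in>F. f i w)"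
    using insert by (simp add: padd_def)
  then show ?case using insert by (simp add: ideal_gen.add)
qed (simp_all add: ideal_gen.zero)

lemma ideal_gen_nc: assumes "R \<subseteq> nc_polys G" "p \<in> Igen" shows "p \<in> nc_polys G"
  using assms(2,1) by (induction rule: ideal_gen.induct) (auto simp: pmul_nc padd_nc)

definition pcong :: "'g ncpoly \<Rightarrow> 'g ncpoly \<Rightarrow> bool" where
  "pcong p q \<longleftrightarrow> psub p q \<in> Igen"

lemma pcong_refl: "pcong p p"
proof -
  have "psub p p = pzero" by (rule ext) (simp add: psub_def)
  then show ?thesis by (simp add: pcong_def ideal_gen.zero)
qed
lemma pcong_sym: "pcong p q \<Longrightarrow> pcong q p"
proof -
  assume "pcong p q"
  have "psub q p = psmul (-1) (psub p q)" by (rule ext) (simp add: psub_def psmul_def)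
  then show ?thesis using \<open>pcong p q\<close> by (simp add: pcong_def ideal_gen_psmul)
qed
lemma pcong_trans: "pcong p q \<Longrightarrow> pcong q r \<Longrightarrow> pcong p r"
proof -
  assume a: "pcong p q" "pcong q r"
  have "psub p r = padd (psub p q) (psub q r)" by (rule ext) (simp add: psub_def padd_def)
  then show ?thesis using a by (simp add: pcong_def ideal_gen.add)
qed
lemma pcong_padd: "pcong p q \<Longrightarrow> pcong p' q' \<Longrightarrow> pcong (padd p p') (padd q q')"
proof -
  assume a: "pcong p q" "pcong p' q'"
  have "psub (padd p p') (padd q q') = padd (psub p q) (psub p' q')"
    by (rule ext) (simp add: psub_def padd_def)
  then show ?thesis using a by (simp add: pcong_def ideal_gen.add)
qed
lemma pcong_psmul: "pcong p q \<Longrightarrow> pcong (psmul c p) (psmul c q)"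
proof -
  assume a: "pcong p q"
  have "psub (psmul c p) (psmul c q) = psmul c (psub p q)"
    by (rule ext) (simp add: psub_def psmul_def algebra_simps)
  then show ?thesis using a by (simp add: pcong_def ideal_gen_psmul)
qed
lemma pcong_pmul_left: "c \<in> nc_polys G \<Longrightarrow> pcong p q \<Longrightarrow> pcong (pmul c p) (pmul c q)"
  by (simp add: pcong_def ideal_gen_pmul_left flip: pmul_psub_right)
lemma pcong_pmul_right: "c \<in> nc_polys G \<Longrightarrow> pcong p q \<Longrightarrow> pcong (pmul p c) (pmul q c)"
  by (simp add: pcong_def ideal_gen_pmul_right flip: pmul_psub_left)
lemma pcong_sum: "(\<And>i. i \<in> S \<Longrightarrow> pcong (f i) (g i)) \<Longrightarrow> pcong (\<lambda>w. \<Sum>i\<in>S. f i w) (\<lambda>w. \<Sum>i\<in>S. g i w)"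
proof -
  assume a: "\<And>i. i \<in> S \<Longrightarrow> pcong (f i) (g i)"
  have "psub (\<lambda>w. \<Sum>i\<in>S. f i w) (\<lambda>w. \<Sum>i\<in>S. g i w) = (\<lambda>w. \<Sum>i\<in>S. psub (f i) (g i) w)"
    by (rule ext) (simp add: psub_def sum_subtractf)
  then show ?thesis using a by (simp add: pcong_def ideal_gen_sum)
qed
lemma pcong_zero_iff: "pcong p pzero \<longleftrightarrow> p \<in> Igen"
proof -
  have "psub p pzero = p" by (rule ext) (simp add: psub_def)
  then show ?thesis by (simp add: pcong_def)
qed

lemma pcong_ideal_gen: "pcong p q \<Longrightarrow> q \<in> Igen \<Longrightarrow> p \<in> Igen"
  by (meson pcong_trans pcong_zero_iff)

end

section \<open>Substitution homomorphisms\<close>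

fun subst_word :: "('g \<Rightarrow> 'h ncpoly) \<Rightarrow> 'g list \<Rightarrow> 'h ncpoly" where
  "subst_word g [] = pone"
| "subst_word g (a#u) = pmul (g a) (subst_word g u)"

definition psubst :: "('g \<Rightarrow> 'h ncpoly) \<Rightarrow> 'g ncpoly \<Rightarrow> 'h ncpoly" where
  "psubst g p = (\<lambda>z. \<Sum>w\<in>{w. p w \<noteq> 0}. p w * subst_word g w z)"

abbreviation finite_poly :: "'g ncpoly \<Rightarrow> bool" where "finite_poly p \<equiv> p \<in> nc_polys UNIV"

lemma finite_poly_nc: "p \<in> nc_polys G \<Longrightarrow> finite_poly p"
  by (erule nc_polys_mono) simp

lemma finite_poly_pgen[simp]: "finite_poly (pgen a)" by (simp add: pgen_nc)

lemma psubst_sum_superset: assumes "finite S" "{w. p w \<noteq> 0} \<subseteq> S"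
  shows "psubst g p = (\<lambda>z. \<Sum>w\<in>S. p w * subst_word g w z)"
  unfolding psubst_def
proof (rule ext)
  fix z show "(\<Sum>w\<in>{w. p w \<noteq> 0}. p w * subst_word g w z) = (\<Sum>w\<in>S. p w * subst_word g w z)"
    by (rule sum.mono_neutral_left[OF assms(1,2)]) auto
qed

lemma psubst_pzero[simp]: "psubst g pzero = pzero" by (simp add: psubst_def)

lemma psubst_padd: assumes "finite_poly p" "finite_poly q" shows "psubst g (padd p q) = padd (psubst g p) (psubst g q)"
proof -
  let ?S = "{w. p w \<noteq> 0} \<union> {w. q w \<noteq> 0}"
  have f: "finite ?S" using nc_polys_finite[OF assms(1)] nc_polys_finite[OF assms(2)] by simp
  have "psubst g (padd p q) = (\<lambda>z. \<Sum>w\<in>?S. padd p q w * subst_word g w z)"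
    by (rule psubst_sum_superset[OF f]) (auto simp: padd_def)
  moreover have "psubst g p = (\<lambda>z. \<Sum>w\<in>?S. p w * subst_word g w z)" by (rule psubst_sum_superset[OF f]) auto
  moreover have "psubst g q = (\<lambda>z. \<Sum>w\<in>?S. q w * subst_word g w z)" by (rule psubst_sum_superset[OF f]) auto
  ultimately show ?thesis by (simp add: padd_def sum.distrib algebra_simps)
qed

lemma psubst_psmul: assumes "finite_poly p" shows "psubst g (psmul c p) = psmul c (psubst g p)"
proof -
  let ?S = "{w. p w \<noteq> 0}"
  have f: "finite ?S" using nc_polys_finite[OF assms(1)] by simp
  have "psubst g (psmul c p) = (\<lambda>z. \<Sum>w\<in>?S. psmul c p w * subst_word g w z)"
    by (rule psubst_sum_superset[OF f]) (auto simp: psmul_def)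
  then show ?thesis by (simp add: psmul_def sum_distrib_left algebra_simps psubst_def)
qed

lemma psubst_psub: assumes "finite_poly p" "finite_poly q" shows "psubst g (psub p q) = psub (psubst g p) (psubst g q)"
proof -
  have "psub p q = padd p (psmul (-1) q)" by (rule ext) (simp add: psub_def padd_def psmul_def)
  moreover have "psub (psubst g p) (psubst g q) = padd (psubst g p) (psmul (-1) (psubst g q))"
    by (rule ext) (simp add: psub_def padd_def psmul_def)
  ultimately show ?thesis using assms by (simp add: psubst_padd psubst_psmul psmul_nc)
qed

lemma psubst_pmon: "psubst g (pmon u) = subst_word g u"
proof -
  have "psubst g (pmon u) = (\<lambda>z. \<Sum>w\<in>{u}. pmon u w * subst_word g w z)"
    by (rule psubst_sum_superset) (auto simp: pmon_def)
  then show ?thesis by (simp add: pmon_def)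
qed

lemma psubst_pone: "psubst g pone = pone"
  using psubst_pmon[of g "[]"] by (simp add: pmon_Nil)

lemma pgen_eq_pmon: "pgen a = pmon [a]"
  by (rule ext) (simp add: pgen_def pmon_def)

lemma psubst_pgen: "psubst g (pgen a) = g a"
  by (simp add: pgen_eq_pmon psubst_pmon)

lemma subst_word_append: "subst_word g (u @ v) = pmul (subst_word g u) (subst_word g v)"
  by (induction u) (simp_all add: pmul_assoc)

lemma psubst_sum: "(\<And>i. i \<in> S \<Longrightarrow> finite_poly (f i)) \<Longrightarrow> psubst g (\<lambda>w. \<Sum>i\<in>S. f i w) = (\<lambda>z. \<Sum>i\<in>S. psubst g (f i) z)"
proof (induction S rule: infinite_finite_induct)
  case (insert x F)
  have "(\<lambda>w. \<Sum>i\<in>insert x F. f i w) = padd (f x) (\<lambda>w. \<Sum>i\<in>F. f i w)"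
    using insert by (simp add: padd_def)
  moreover have "finite_poly (\<lambda>w. \<Sum>i\<in>F. f i w)" using insert by (simp add: sum_nc)
  ultimately have "psubst g (\<lambda>w. \<Sum>i\<in>insert x F. f i w) = padd (psubst g (f x)) (psubst g (\<lambda>w. \<Sum>i\<in>F. f i w))"
    using insert by (simp add: psubst_padd)
  then show ?case using insert by (simp add: padd_def)
qed simp_all

lemma psubst_pmul_pmon: assumes "finite_poly q" shows "psubst g (pmul (pmon u) q) = pmul (subst_word g u) (psubst g q)"
  using assms
proof (induction q rule: nc_polys_induct)
  case zero then show ?case by simp
next
  case (step q c v)
  have "pmul (pmon u) (padd q (psmul c (pmon v))) = padd (pmul (pmon u) q) (psmul c (pmon (u @ v)))"
    by (simp add: pmul_padd_right pmul_psmul_right pmul_pmon)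
  moreover have "finite_poly (pmul (pmon u) q)" using step by (simp add: pmul_nc pmon_nc)
  ultimately show ?case using step
    by (simp add: psubst_padd psubst_psmul psmul_nc pmon_nc psubst_pmon subst_word_append pmul_padd_right pmul_psmul_right)
qed

lemma psubst_pmul: assumes "finite_poly p" "finite_poly q" shows "psubst g (pmul p q) = pmul (psubst g p) (psubst g q)"
  using assms(1)
proof (induction p rule: nc_polys_induct)
  case zero then show ?case by simp
next
  case (step p c u)
  have "pmul (padd p (psmul c (pmon u))) q = padd (pmul p q) (psmul c (pmul (pmon u) q))"
    by (simp add: pmul_padd_left pmul_psmul_left)
  moreover have "finite_poly (pmul p q)" "finite_poly (pmul (pmon u) q)" using step assms by (simp_all add: pmul_nc pmon_nc)
  ultimately show ?case using step assms
    by (simp add: psubst_padd psubst_psmul psmul_nc pmon_nc psubst_pmon psubst_pmul_pmon pmul_padd_left pmul_psmul_left)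
qed

lemma subst_word_nc: "set u \<subseteq> G \<Longrightarrow> (\<And>a. a \<in> G \<Longrightarrow> g a \<in> nc_polys G') \<Longrightarrow> subst_word g u \<in> nc_polys G'"
  by (induction u) (simp_all add: pmul_nc)

lemma psubst_nc: assumes "p \<in> nc_polys G" "\<And>a. a \<in> G \<Longrightarrow> g a \<in> nc_polys G'"
  shows "psubst g p \<in> nc_polys G'"
proof -
  have "psubst g p = (\<lambda>z. \<Sum>w\<in>{w. p w \<noteq> 0}. psmul (p w) (subst_word g w) z)"
    by (simp add: psubst_def psmul_def)
  moreover have "psmul (p w) (subst_word g w) \<in> nc_polys G'" if "w \<in> {w. p w \<noteq> 0}" for w
    using that nc_polys_words[OF assms(1)] assms(2) by (intro psmul_nc subst_word_nc) auto
  ultimately show ?thesis using sum_nc[of "{w. p w \<noteq> 0}" "\<lambda>w. psmul (p w) (subst_word g w)" G'] by simp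
qed

lemma psubst_cong: assumes "p \<in> nc_polys G" "\<And>a. a \<in> G \<Longrightarrow> g a = g' a" shows "psubst g p = psubst g' p"
proof -
  have "subst_word g w = subst_word g' w" if "set w \<subseteq> G" for w
    using that assms(2) by (induction w) auto
  then show ?thesis unfolding psubst_def using nc_polys_words[OF assms(1)]
    by (intro ext sum.cong) auto
qed

lemma subst_word_pgen: "subst_word pgen u = pmon u"
  by (induction u) (simp_all add: pmon_Nil pmon_Cons)

lemma psubst_pgen_id: assumes "finite_poly p" shows "psubst pgen p = p"
proof (rule ext)
  fix z
  have "psubst pgen p z = (\<Sum>w\<in>{w. p w \<noteq> 0}. p w * pmon w z)" by (simp add: psubst_def subst_word_pgen)
  also have "\<dots> = (\<Sum>w\<in>{w. p w \<noteq> 0}. if w = z then p z else 0)"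
    by (intro sum.cong) (auto simp: pmon_def)
  also have "\<dots> = p z" using nc_polys_finite[OF assms] by (simp add: sum.delta')
  finally show "psubst pgen p z = p z" .
qed

lemma psubst_subst_word: assumes "\<And>a. finite_poly (g a)" shows "psubst h (subst_word g u) = subst_word (\<lambda>a. psubst h (g a)) u"
proof (induction u)
  case Nil then show ?case by (simp add: psubst_pone)
next
  case (Cons a u)
  have "finite_poly (subst_word g u)" using assms by (intro subst_word_nc) auto
  then show ?case using Cons assms by (simp add: psubst_pmul)
qed

lemma psubst_psubst: assumes "finite_poly p" "\<And>a. finite_poly (g a)" shows "psubst h (psubst g p) = psubst (\<lambda>a. psubst h (g a)) p"
  using assms(1)
proof (induction p rule: nc_polys_induct)
  case zero then show ?case by simp
next
  case (step p c u)
  have f1: "finite_poly (psubst g p)" using step assms by (simp add: psubst_nc)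
  have f2: "finite_poly (subst_word g u)" using assms by (intro subst_word_nc) auto
  show ?case using step f1 f2
    by (simp add: psubst_padd psubst_psmul psmul_nc pmon_nc psubst_pmon psubst_subst_word[OF assms(2)])
qed

lemma psubst_ideal_gen:
  assumes RG: "R \<subseteq> nc_polys G" and gG: "\<And>a. a \<in> G \<Longrightarrow> g a \<in> nc_polys G'"
    and rel: "\<And>r. r \<in> R \<Longrightarrow> psubst g r \<in> ideal_gen (nc_polys G') R'"
    and p: "p \<in> ideal_gen (nc_polys G) R"
  shows "psubst g p \<in> ideal_gen (nc_polys G') R'"
  using p
proof (induction rule: ideal_gen.induct)
  case zero then show ?case by (simp add: ideal_gen.zero)
next
  case (gen r a b)
  have fr: "finite_poly r" using gen RG finite_poly_nc by blast
  have "psubst g (pmul (pmul a r) b) = pmul (pmul (psubst g a) (psubst g r)) (psubst g b)"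
    using gen fr by (simp add: psubst_pmul pmul_nc finite_poly_nc)
  moreover have "psubst g a \<in> nc_polys G'" "psubst g b \<in> nc_polys G'" using gen gG by (simp_all add: psubst_nc)
  ultimately show ?case using rel[OF gen(1)] by (simp add: ideal_gen_pmul_left ideal_gen_pmul_right)
next
  case (add p q)
  have "finite_poly p" "finite_poly q" using add ideal_gen_nc[OF RG] finite_poly_nc by blast+
  then show ?case using add by (simp add: psubst_padd ideal_gen.add)
qed

section \<open>Commuting elements and corners\<close>

lemma pcong_commute_pmon:
  assumes Pn: "P \<in> nc_polys G" and S: "S \<subseteq> G"
    and gen: "\<And>a. a \<in> S \<Longrightarrow> pcong G R (pmul P (pgen a)) (pmul (pgen a) P)"
  shows "set u \<subseteq> S \<Longrightarrow> pcong G R (pmul P (pmon u)) (pmul (pmon u) P)"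
proof (induction u)
  case Nil then show ?case by (simp add: pmon_Nil pcong_refl)
next
  case (Cons a u)
  have an: "pgen a \<in> nc_polys G" using Cons S by (simp add: pgen_nc subset_iff)
  have un: "pmon u \<in> nc_polys G" using Cons S by (intro pmon_nc) auto
  have "pcong G R (pmul (pmul P (pgen a)) (pmon u)) (pmul (pmul (pgen a) P) (pmon u))"
    using gen Cons un by (intro pcong_pmul_right) auto
  moreover have "pcong G R (pmul (pgen a) (pmul P (pmon u))) (pmul (pgen a) (pmul (pmon u) P))"
    using Cons an by (intro pcong_pmul_left) auto
  ultimately show ?case by (simp add: pmon_Cons pmul_assoc pcong_trans)
qed

lemma pcong_commute:
  assumes Pn: "P \<in> nc_polys G" and S: "S \<subseteq> G"
    and gen: "\<And>a. a \<in> S \<Longrightarrow> pcong G R (pmul P (pgen a)) (pmul (pgen a) P)"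
    and q: "q \<in> nc_polys S"
  shows "pcong G R (pmul P q) (pmul q P)"
  using q
proof (induction q rule: nc_polys_induct)
  case zero then show ?case by (simp add: pcong_refl)
next
  case (step q c u)
  have "pcong G R (pmul P (pmon u)) (pmul (pmon u) P)" using pcong_commute_pmon[OF Pn S gen] step by blast
  then have "pcong G R (padd (pmul P q) (psmul c (pmul P (pmon u)))) (padd (pmul q P) (psmul c (pmul (pmon u) P)))"
    using step by (intro pcong_padd pcong_psmul)
  then show ?case by (simp add: pmul_padd_left pmul_padd_right pmul_psmul_left pmul_psmul_right)
qed

lemma pcong_corner_subst_word:
  assumes Pn: "P \<in> nc_polys G" and kn: "\<And>a. a \<in> G \<Longrightarrow> k a \<in> nc_polys G"
    and absorb: "\<And>a. a \<in> G \<Longrightarrow> pcong G R (pmul P (k a)) (pmul P (pgen a))"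
    and commute: "\<And>a. a \<in> G \<Longrightarrow> pcong G R (pmul P (k a)) (pmul (k a) P)"
  shows "set u \<subseteq> G \<Longrightarrow> pcong G R (pmul P (subst_word k u)) (pmul P (pmon u))"
proof (induction u)
  case Nil then show ?case by (simp add: pmon_Nil pcong_refl)
next
  case (Cons a u)
  have aG: "a \<in> G" and uG: "set u \<subseteq> G" using Cons by auto
  have Wn: "subst_word k u \<in> nc_polys G" using uG kn by (simp add: subst_word_nc)
  have Mn: "pmon u \<in> nc_polys G" using uG by (simp add: pmon_nc)
  have c1: "pcong G R (pmul (pmul P (k a)) (subst_word k u)) (pmul (pmul (k a) P) (subst_word k u))"
    using commute[OF aG] Wn by (intro pcong_pmul_right)
  have c2: "pcong G R (pmul (k a) (pmul P (subst_word k u))) (pmul (k a) (pmul P (pmon u)))"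
    by (rule pcong_pmul_left[OF kn[OF aG] Cons(1)[OF uG]])
  have c3: "pcong G R (pmul (pmul (k a) P) (pmon u)) (pmul (pmul P (k a)) (pmon u))"
    using pcong_sym[OF commute[OF aG]] Mn by (intro pcong_pmul_right)
  have c4: "pcong G R (pmul (pmul P (k a)) (pmon u)) (pmul (pmul P (pgen a)) (pmon u))"
    using absorb[OF aG] Mn by (intro pcong_pmul_right)
  have "pcong G R (pmul P (subst_word k (a # u))) (pmul (pmul (k a) P) (subst_word k u))"
    using c1 by (simp add: pmul_assoc)
  also have "pmul (pmul (k a) P) (subst_word k u) = pmul (k a) (pmul P (subst_word k u))" by (simp add: pmul_assoc)
  finally have d1: "pcong G R (pmul P (subst_word k (a # u))) (pmul (k a) (pmul P (pmon u)))"
    using c2 pcong_trans by blast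
  have "pmul (k a) (pmul P (pmon u)) = pmul (pmul (k a) P) (pmon u)" by (simp add: pmul_assoc)
  then have "pcong G R (pmul P (subst_word k (a # u))) (pmul (pmul P (pgen a)) (pmon u))"
    using d1 c3 c4 pcong_trans by metis
  then show ?case by (simp add: pmon_Cons pmul_assoc)
qed

lemma pcong_corner:
  assumes Pn: "P \<in> nc_polys G" and kn: "\<And>a. a \<in> G \<Longrightarrow> k a \<in> nc_polys G"
    and absorb: "\<And>a. a \<in> G \<Longrightarrow> pcong G R (pmul P (k a)) (pmul P (pgen a))"
    and commute: "\<And>a. a \<in> G \<Longrightarrow> pcong G R (pmul P (k a)) (pmul (k a) P)"
    and d: "d \<in> nc_polys G"
  shows "pcong G R (pmul P (psubst k d)) (pmul P d)"
  using d
proof (induction d rule: nc_polys_induct)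
  case zero then show ?case by (simp add: pcong_refl)
next
  case (step d c u)
  have f: "finite_poly d" "finite_poly (pmon u)" using step by (simp_all add: finite_poly_nc pmon_nc)
  have "pcong G R (pmul P (subst_word k u)) (pmul P (pmon u))" using pcong_corner_subst_word[OF Pn kn absorb commute] step by blast
  then have "pcong G R (padd (pmul P (psubst k d)) (psmul c (pmul P (subst_word k u))))
                    (padd (pmul P d) (psmul c (pmul P (pmon u))))"
    using step by (intro pcong_padd pcong_psmul)
  then show ?case using f
    by (simp add: psubst_padd psubst_psmul psmul_nc psubst_pmon pmul_padd_right pmul_psmul_right)
qed

lemma lc_rel_partition: "v \<in> V \<Longrightarrow> psub (\<lambda>u. \<Sum>x\<in>W. pgen (v, x) u) pone \<in> lc_rels V E W F"
  unfolding lc_rels_def by blast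
lemma lc_rel_idempotent: "v \<in> V \<Longrightarrow> x \<in> W \<Longrightarrow> psub (pmul (pgen (v, x)) (pgen (v, x))) (pgen (v, x)) \<in> lc_rels V E W F"
  unfolding lc_rels_def by blast
lemma lc_rel_orthogonal: "v \<in> V \<Longrightarrow> x \<in> W \<Longrightarrow> y \<in> W \<Longrightarrow> x \<noteq> y \<Longrightarrow> pmul (pgen (v, x)) (pgen (v, y)) \<in> lc_rels V E W F"
  unfolding lc_rels_def by blast
lemma lc_rel_nonadjacent: "v \<in> V \<Longrightarrow> w \<in> V \<Longrightarrow> x \<in> W \<Longrightarrow> y \<in> W \<Longrightarrow> E v w \<Longrightarrow> \<not> F x y \<Longrightarrow>
    pmul (pgen (v, x)) (pgen (w, y)) \<in> lc_rels V E W F"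
  unfolding lc_rels_def by blast
lemma lc_rel_commute: "v \<in> V \<Longrightarrow> w \<in> V \<Longrightarrow> x \<in> W \<Longrightarrow> y \<in> W \<Longrightarrow> E v w \<Longrightarrow>
    psub (pmul (pgen (v, x)) (pgen (w, y))) (pmul (pgen (w, y)) (pgen (v, x))) \<in> lc_rels V E W F"
  unfolding lc_rels_def by blast

lemma lc_rels_cases:
  assumes "r \<in> lc_rels V E W F"
  obtains (partition) v where "v \<in> V" "r = psub (\<lambda>u. \<Sum>x\<in>W. pgen (v, x) u) pone"
  | (idempotent) v x where "v \<in> V" "x \<in> W" "r = psub (pmul (pgen (v, x)) (pgen (v, x))) (pgen (v, x))"
  | (orthogonal) v x y where "v \<in> V" "x \<in> W" "y \<in> W" "x \<noteq> y" "r = pmul (pgen (v, x)) (pgen (v, y))"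
  | (nonadjacent) v w x y where "v \<in> V" "w \<in> V" "x \<in> W" "y \<in> W" "E v w" "\<not> F x y"
       "r = pmul (pgen (v, x)) (pgen (w, y))"
  | (commute) v w x y where "v \<in> V" "w \<in> V" "x \<in> W" "y \<in> W" "E v w"
       "r = psub (pmul (pgen (v, x)) (pgen (w, y))) (pmul (pgen (w, y)) (pgen (v, x)))"
  using assms unfolding lc_rels_def by blast

lemma lc_rels_nc: "lc_rels V E W F \<subseteq> nc_polys (V \<times> W)"
proof
  fix r assume "r \<in> lc_rels V E W F"
  then show "r \<in> nc_polys (V \<times> W)"
  proof (cases rule: lc_rels_cases)
    case (partition v) then show ?thesis by (simp add: psub_nc sum_nc pgen_nc)
  next
    case (idempotent v x) then show ?thesis by (simp add: psub_nc pmul_nc pgen_nc)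
  next
    case (orthogonal v x y) then show ?thesis by (simp add: pmul_nc pgen_nc)
  next
    case (nonadjacent v w x y) then show ?thesis by (simp add: pmul_nc pgen_nc)
  next
    case (commute v w x y) then show ?thesis by (simp add: psub_nc pmul_nc pgen_nc)
  qed
qed

lemma qsub_presented: "qsub (presented G R) a b = psub a b"
  by (rule ext) (simp add: qsub_def presented_def padd_def psmul_def psub_def)

lemma dsum_qsub_idl: "(qsub (dsum T A) f g \<in> idl (dsum T A)) \<longleftrightarrow> (\<forall>y\<in>T. qsub (A y) (f y) (g y) \<in> idl (A y))"
  by (simp add: qsub_def dsum_def)

lemma idl_presented: "idl (presented G R) = ideal_gen (nc_polys G) R" by (simp add: presented_def)

section \<open>Splitting A_lc(\<Sigma>G,H) along the apex generators\<close>

text \<open>The summands are indexed by T \<supseteq> H_ni; the y-th summand is A_lc(G, N' y) for a graph on N' y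
  that \<tau> y makes isomorphic to the neighbourhood of y. This covers both the decomposition itself
  (T = H_ni, \<tau> y = id) and the vertex-transitive case (T = V(H), one fixed neighbourhood).
  Isolated members of T have N' y = {}, and A_lc(G, {}) is the zero algebra as V(G) \<noteq> {}.\<close>
locale susp_decomp =
  fixes V :: "'a set" and E :: "'a \<Rightarrow> 'a \<Rightarrow> bool"
    and W :: "'b set" and F :: "'b \<Rightarrow> 'b \<Rightarrow> bool"
    and T :: "'b set" and N' :: "'b \<Rightarrow> 'b set" and F' :: "'b \<Rightarrow> 'b \<Rightarrow> 'b \<Rightarrow> bool"
    and \<tau> :: "'b \<Rightarrow> 'b \<Rightarrow> 'b"
  assumes graph_G: "graph V E" and G_nonempty: "V \<noteq> {}" and graph_H: "graph W F"
    and T_subset: "T \<subseteq> W" and non_isolated_subset_T: "non_isolated W F \<subseteq> T"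
    and relabel_bij: "\<And>y. y \<in> T \<Longrightarrow> bij_betw (\<tau> y) (nbhd_V W F y) (N' y)"
    and relabel_adj: "\<And>y x1 x2. y \<in> T \<Longrightarrow> x1 \<in> nbhd_V W F y \<Longrightarrow> x2 \<in> nbhd_V W F y \<Longrightarrow>
        F x1 x2 \<longleftrightarrow> F' y (\<tau> y x1) (\<tau> y x2)"
begin

abbreviation "Nb \<equiv> nbhd_V W F"
abbreviation "GA \<equiv> susp_V V \<times> W"
abbreviation "RA \<equiv> lc_rels (susp_V V) (susp_E V E) W F"
abbreviation "GB y \<equiv> V \<times> N' y"
abbreviation "RB y \<equiv> lc_rels V E (N' y) (F' y)"
abbreviation "IA \<equiv> ideal_gen (nc_polys GA) RA"
abbreviation "IB y \<equiv> ideal_gen (nc_polys (GB y)) (RB y)"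
abbreviation "pcongA \<equiv> pcong GA RA"

definition tau_inv :: "'b \<Rightarrow> 'b \<Rightarrow> 'b" where "tau_inv y = inv_into (Nb y) (\<tau> y)"

definition restr_gen :: "'b \<Rightarrow> 'a option \<times> 'b \<Rightarrow> ('a \<times> 'b) ncpoly" where
  "restr_gen y a = (case a of (None, x) \<Rightarrow> if x = y then pone else pzero
                   | (Some v, x) \<Rightarrow> if x \<in> Nb y then pgen (v, \<tau> y x) else pzero)"

definition lift_gen :: "'b \<Rightarrow> 'a \<times> 'b \<Rightarrow> ('a option \<times> 'b) ncpoly" where
  "lift_gen y a = pgen (Some (fst a), tau_inv y (snd a))"

definition proj :: "'b \<Rightarrow> ('a option \<times> 'b) ncpoly" where "proj y = pgen (None, y)"

definition restr :: "'b \<Rightarrow> ('a option \<times> 'b) ncpoly \<Rightarrow> ('a \<times> 'b) ncpoly" where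
  "restr y = psubst (restr_gen y)"

definition lift :: "'b \<Rightarrow> ('a \<times> 'b) ncpoly \<Rightarrow> ('a option \<times> 'b) ncpoly" where
  "lift y = psubst (lift_gen y)"

definition decomp :: "('a option \<times> 'b) ncpoly \<Rightarrow> 'b \<Rightarrow> ('a \<times> 'b) ncpoly" where
  "decomp a = (\<lambda>y. if y \<in> T then restr y a else undefined)"

definition recomb :: "('b \<Rightarrow> ('a \<times> 'b) ncpoly) \<Rightarrow> ('a option \<times> 'b) ncpoly" where
  "recomb f = (\<lambda>w. \<Sum>y\<in>T. pmul (proj y) (lift y (f y)) w)"

lemma finite_W: "finite W" using graph_H by (simp add: graph_def)
lemma finite_T: "finite T" using finite_W T_subset finite_subset by blast
lemma adj_sym: "F a b \<Longrightarrow> F b a" using graph_H by (simp add: graph_def)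
lemma edge_vertices: "E a b \<Longrightarrow> a \<in> V \<and> b \<in> V" using graph_G by (simp add: graph_def)
lemma Nb_subset: "Nb y \<subseteq> W" by (auto simp: nbhd_V_def)
lemma Nb_iff: "x \<in> Nb y \<longleftrightarrow> x \<in> W \<and> F y x" by (simp add: nbhd_V_def)

lemma susp_V_iff: "Some v \<in> susp_V V \<longleftrightarrow> v \<in> V" "None \<in> susp_V V" by (auto simp: susp_V_def)
lemma susp_E_simps: "susp_E V E None (Some w) \<longleftrightarrow> w \<in> V" "susp_E V E (Some w) None \<longleftrightarrow> w \<in> V"
  "susp_E V E (Some v) (Some w) \<longleftrightarrow> E v w" "\<not> susp_E V E None None"
  by (simp_all add: susp_E_def)

lemma tau_in: "y \<in> T \<Longrightarrow> x \<in> Nb y \<Longrightarrow> \<tau> y x \<in> N' y"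
  using relabel_bij by (meson bij_betwE)
lemma tau_inj: "y \<in> T \<Longrightarrow> x1 \<in> Nb y \<Longrightarrow> x2 \<in> Nb y \<Longrightarrow> \<tau> y x1 = \<tau> y x2 \<Longrightarrow> x1 = x2"
  using relabel_bij by (meson bij_betw_def inj_onD)
lemma tau_inv_bij: "y \<in> T \<Longrightarrow> bij_betw (tau_inv y) (N' y) (Nb y)"
  unfolding tau_inv_def using relabel_bij by (simp add: bij_betw_inv_into)
lemma tau_inv_in: "y \<in> T \<Longrightarrow> x \<in> N' y \<Longrightarrow> tau_inv y x \<in> Nb y"
  using tau_inv_bij by (meson bij_betwE)
lemma tau_tau_inv: assumes "y \<in> T" "x \<in> N' y" shows "\<tau> y (tau_inv y x) = x"
proof -
  have "x \<in> \<tau> y ` Nb y" using relabel_bij[OF assms(1)] assms(2) by (simp add: bij_betw_def)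
  then show ?thesis unfolding tau_inv_def by (rule f_inv_into_f)
qed
lemma tau_inv_tau: "y \<in> T \<Longrightarrow> x \<in> Nb y \<Longrightarrow> tau_inv y (\<tau> y x) = x"
  unfolding tau_inv_def using relabel_bij by (meson bij_betw_def inv_into_f_f)

lemma restr_gen_None: "restr_gen y (None, x) = (if x = y then pone else pzero)" by (simp add: restr_gen_def)
lemma restr_gen_Some: "restr_gen y (Some v, x) = (if x \<in> Nb y then pgen (v, \<tau> y x) else pzero)" by (simp add: restr_gen_def)

lemma finite_poly_restr_gen: "finite_poly (restr_gen y a)" by (cases a; cases "fst a") (auto simp: restr_gen_def)
lemma finite_poly_lift_gen: "finite_poly (lift_gen y a)" by (simp add: lift_gen_def)

lemma restr_gen_nc: "y \<in> T \<Longrightarrow> a \<in> GA \<Longrightarrow> restr_gen y a \<in> nc_polys (GB y)"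
  by (cases a; cases "fst a") (auto simp: restr_gen_def susp_V_def intro!: pgen_nc tau_in)

lemma lift_gen_nc: "y \<in> T \<Longrightarrow> a \<in> GB y \<Longrightarrow> lift_gen y a \<in> nc_polys GA"
  using Nb_subset by (cases a) (auto simp: lift_gen_def susp_V_def intro!: pgen_nc dest: tau_inv_in)

lemma restr_nc: "y \<in> T \<Longrightarrow> p \<in> nc_polys GA \<Longrightarrow> restr y p \<in> nc_polys (GB y)"
  unfolding restr_def by (rule psubst_nc) (auto intro: restr_gen_nc)

lemma lift_nc: "y \<in> T \<Longrightarrow> p \<in> nc_polys (GB y) \<Longrightarrow> lift y p \<in> nc_polys GA"
  unfolding lift_def by (rule psubst_nc) (auto intro: lift_gen_nc)

lemma proj_nc: "y \<in> W \<Longrightarrow> proj y \<in> nc_polys GA"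
  by (simp add: proj_def pgen_nc susp_V_def)

lemma restr_gen_cases:
  obtains "restr_gen y a = pzero" | "restr_gen y a = pone"
  | v x where "a = (Some v, x)" "x \<in> Nb y" "restr_gen y a = pgen (v, \<tau> y x)"
proof (cases a)
  case (Pair b x)
  show thesis
  proof (cases b)
    case None then show thesis using that(1,2) Pair by (cases "x = y") (simp_all add: restr_gen_def)
  next
    case (Some v) then show thesis using that(1,3) Pair by (cases "x \<in> Nb y") (simp_all add: restr_gen_def)
  qed
qed

lemma restr_pgen: "restr y (pgen a) = restr_gen y a" by (simp add: restr_def psubst_pgen)

lemma restr_apex_partition_sum: assumes "y \<in> T" shows "(\<lambda>z. \<Sum>x\<in>W. restr_gen y (None, x) z) = pone"
proof (rule ext)
  fix z
  have "(\<Sum>x\<in>W. restr_gen y (None, x) z) = (\<Sum>x\<in>W. if x = y then pone z else 0)"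
    by (intro sum.cong) (auto simp: restr_gen_None)
  also have "\<dots> = pone z" using assms T_subset finite_W by auto
  finally show "(\<Sum>x\<in>W. restr_gen y (None, x) z) = pone z" .
qed

lemma restr_partition_sum: assumes y: "y \<in> T"
  shows "(\<lambda>z. \<Sum>x\<in>W. restr_gen y (Some v, x) z) = (\<lambda>z. \<Sum>x'\<in>N' y. pgen (v, x') z)"
proof (rule ext)
  fix z
  have "(\<Sum>x\<in>W. restr_gen y (Some v, x) z) = (\<Sum>x\<in>Nb y. restr_gen y (Some v, x) z)"
    by (rule sum.mono_neutral_right[OF finite_W Nb_subset]) (auto simp: restr_gen_Some)
  also have "\<dots> = (\<Sum>x\<in>Nb y. pgen (v, \<tau> y x) z)" by (rule sum.cong) (auto simp: restr_gen_Some)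
  also have "\<dots> = (\<Sum>x'\<in>N' y. pgen (v, x') z)"
    by (rule sum.reindex_bij_betw[OF relabel_bij[OF y], of "\<lambda>x'. pgen (v, x') z"])
  finally show "(\<Sum>x\<in>W. restr_gen y (Some v, x) z) = (\<Sum>x'\<in>N' y. pgen (v, x') z)" .
qed

lemma restr_partition_rel:
  assumes y: "y \<in> T" and a: "a \<in> susp_V V"
  shows "restr y (psub (\<lambda>z. \<Sum>x\<in>W. pgen (a, x) z) pone) \<in> IB y"
proof -
  have e: "restr y (psub (\<lambda>z. \<Sum>x\<in>W. pgen (a, x) z) pone) = psub (\<lambda>z. \<Sum>x\<in>W. restr_gen y (a, x) z) pone"
    by (simp add: restr_def psubst_psub psubst_sum sum_nc psubst_pgen psubst_pone)
  show ?thesis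
  proof (cases a)
    case None
    then show ?thesis using e restr_apex_partition_sum[OF y] by (simp add: ideal_gen.zero)
  next
    case (Some v)
    then have "v \<in> V" using a by (simp add: susp_V_iff)
    then show ?thesis using e Some restr_partition_sum[OF y]
      by (simp add: ideal_gen_rel lc_rel_partition)
  qed
qed

lemma restr_idempotent_rel:
  assumes y: "y \<in> T" and a: "a \<in> susp_V V"
  shows "restr y (psub (pmul (pgen (a, x)) (pgen (a, x))) (pgen (a, x))) \<in> IB y"
proof -
  have e: "restr y (psub (pmul (pgen (a, x)) (pgen (a, x))) (pgen (a, x)))
      = psub (pmul (restr_gen y (a, x)) (restr_gen y (a, x))) (restr_gen y (a, x))"
    by (simp add: restr_def psubst_psub psubst_pmul pmul_nc psubst_pgen)
  show ?thesis
  proof (cases rule: restr_gen_cases[of y "(a, x)"])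
    case (3 v x')
    then show ?thesis using e a y by (simp add: susp_V_iff ideal_gen_rel lc_rel_idempotent tau_in)
  qed (use e in \<open>simp_all add: ideal_gen.zero\<close>)
qed

lemma restr_orthogonal_rel:
  assumes y: "y \<in> T" and a: "a \<in> susp_V V" and "x1 \<noteq> x2"
  shows "restr y (pmul (pgen (a, x1)) (pgen (a, x2))) \<in> IB y"
proof -
  have e: "restr y (pmul (pgen (a, x1)) (pgen (a, x2))) = pmul (restr_gen y (a, x1)) (restr_gen y (a, x2))"
    by (simp add: restr_def psubst_pmul psubst_pgen)
  show ?thesis
  proof (cases a)
    case None
    then show ?thesis using e \<open>x1 \<noteq> x2\<close> by (auto simp: restr_gen_None ideal_gen.zero)
  next
    case (Some v)
    show ?thesis
    proof (cases "x1 \<in> Nb y \<and> x2 \<in> Nb y")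
      case True
      then have "\<tau> y x1 \<noteq> \<tau> y x2" using tau_inj[OF y] \<open>x1 \<noteq> x2\<close> by blast
      then show ?thesis using e Some True a y
        by (simp add: susp_V_iff restr_gen_Some ideal_gen_rel lc_rel_orthogonal tau_in)
    qed (use e Some in \<open>auto simp: restr_gen_Some ideal_gen.zero\<close>)
  qed
qed

lemma restr_nonadjacent_rel:
  assumes y: "y \<in> T" and ab: "susp_E V E a b" and x: "x1 \<in> W" "x2 \<in> W" and nF: "\<not> F x1 x2"
  shows "restr y (pmul (pgen (a, x1)) (pgen (b, x2))) \<in> IB y"
proof -
  have e: "restr y (pmul (pgen (a, x1)) (pgen (b, x2))) = pmul (restr_gen y (a, x1)) (restr_gen y (b, x2))"
    by (simp add: restr_def psubst_pmul psubst_pgen)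
  show ?thesis
  proof (cases a; cases b)
    fix v w assume ab_eq: "a = Some v" "b = Some w"
    show ?thesis
    proof (cases "x1 \<in> Nb y \<and> x2 \<in> Nb y")
      case True
      then have "\<not> F' y (\<tau> y x1) (\<tau> y x2)" using relabel_adj[OF y] nF by blast
      moreover have "E v w" using ab ab_eq by (simp add: susp_E_simps)
      ultimately show ?thesis using e ab_eq True y
        by (simp add: restr_gen_Some ideal_gen_rel lc_rel_nonadjacent tau_in edge_vertices)
    qed (use e ab_eq in \<open>auto simp: restr_gen_Some ideal_gen.zero\<close>)
  next
    fix w assume "a = None" "b = Some w"
    moreover have "\<not> (x1 = y \<and> x2 \<in> Nb y)" using nF by (auto simp: Nb_iff)
    ultimately show ?thesis using e by (auto simp: restr_gen_None restr_gen_Some ideal_gen.zero)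
  next
    fix v assume "a = Some v" "b = None"
    moreover have "\<not> (x1 \<in> Nb y \<and> x2 = y)" using nF by (auto simp: Nb_iff dest: adj_sym)
    ultimately show ?thesis using e by (auto simp: restr_gen_None restr_gen_Some ideal_gen.zero)
  qed (use ab in \<open>simp add: susp_E_simps\<close>)
qed

lemma restr_commute_rel:
  assumes y: "y \<in> T" and ab: "susp_E V E a b"
  shows "restr y (psub (pmul (pgen (a, x1)) (pgen (b, x2))) (pmul (pgen (b, x2)) (pgen (a, x1)))) \<in> IB y"
proof -
  have e: "restr y (psub (pmul (pgen (a, x1)) (pgen (b, x2))) (pmul (pgen (b, x2)) (pgen (a, x1))))
      = psub (pmul (restr_gen y (a, x1)) (restr_gen y (b, x2)))
             (pmul (restr_gen y (b, x2)) (restr_gen y (a, x1)))"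
    by (simp add: restr_def psubst_psub psubst_pmul pmul_nc psubst_pgen)
  show ?thesis
  proof (cases rule: restr_gen_cases[of y "(a, x1)"]; cases rule: restr_gen_cases[of y "(b, x2)"])
    fix v x' w x''
    assume "(a, x1) = (Some v, x')" "x' \<in> Nb y" "restr_gen y (a, x1) = pgen (v, \<tau> y x')"
      and "(b, x2) = (Some w, x'')" "x'' \<in> Nb y" "restr_gen y (b, x2) = pgen (w, \<tau> y x'')"
    moreover have "E v w" using ab calculation by (simp add: susp_E_simps)
    ultimately show ?thesis using e y by (simp add: ideal_gen_rel lc_rel_commute tau_in edge_vertices)
  qed (use e in \<open>simp_all add: ideal_gen.zero\<close>)
qed

lemma restr_rel: assumes y: "y \<in> T" and r: "r \<in> RA" shows "restr y r \<in> IB y"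
  using r
proof (cases rule: lc_rels_cases)
  case partition then show ?thesis using y by (simp add: restr_partition_rel)
next
  case idempotent then show ?thesis using y by (simp add: restr_idempotent_rel)
next
  case orthogonal then show ?thesis using y by (simp add: restr_orthogonal_rel)
next
  case nonadjacent then show ?thesis using y by (simp add: restr_nonadjacent_rel)
next
  case commute then show ?thesis using y by (simp add: restr_commute_rel)
qed

lemma restr_ideal: "y \<in> T \<Longrightarrow> p \<in> IA \<Longrightarrow> restr y p \<in> IB y"
  unfolding restr_def by (rule psubst_ideal_gen[OF lc_rels_nc restr_gen_nc]) (auto simp: restr_rel[unfolded restr_def])

abbreviation "GV \<equiv> (Some ` V) \<times> W"

lemma GV_subset: "GV \<subseteq> GA" by (auto simp: susp_V_def)

lemma lift_gen_nc_GV: "y \<in> T \<Longrightarrow> a \<in> GB y \<Longrightarrow> lift_gen y a \<in> nc_polys GV"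
  using Nb_subset by (cases a) (auto simp: lift_gen_def intro!: pgen_nc dest: tau_inv_in)

lemma lift_nc_GV: "y \<in> T \<Longrightarrow> p \<in> nc_polys (GB y) \<Longrightarrow> lift y p \<in> nc_polys GV"
  unfolding lift_def by (rule psubst_nc) (auto intro: lift_gen_nc_GV)

lemma proj_commute_pgen: "y \<in> W \<Longrightarrow> a \<in> GV \<Longrightarrow> pcongA (pmul (proj y) (pgen a)) (pmul (pgen a) (proj y))"
  by (auto simp: pcong_def proj_def intro!: ideal_gen_rel lc_rel_commute simp: susp_V_iff susp_E_simps)

lemma proj_commute: "y \<in> W \<Longrightarrow> q \<in> nc_polys GV \<Longrightarrow> pcongA (pmul (proj y) q) (pmul q (proj y))"
  by (rule pcong_commute[OF proj_nc GV_subset proj_commute_pgen])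

lemma lift_pgen: "lift y (pgen (v, x)) = pgen (Some v, tau_inv y x)"
  by (simp add: lift_def psubst_pgen lift_gen_def)

\<comment> \<open>The apex projection kills every e_{v,x} with x outside N_y, so it turns the
  partition relation of A_lc(\<Sigma>G,H) into the one of A_lc(G,N_y).\<close>
lemma proj_lift_partition_rel:
  assumes y: "y \<in> T" and v: "v \<in> V"
  shows "pmul (proj y) (lift y (psub (\<lambda>z. \<Sum>x\<in>N' y. pgen (v, x) z) pone)) \<in> IA"
proof -
  have yW: "y \<in> W" using y T_subset by blast
  let ?e = "\<lambda>x. pgen (Some v, x)"
  let ?SN = "\<lambda>z. \<Sum>x\<in>Nb y. ?e x z"
  let ?SW = "\<lambda>z. \<Sum>x\<in>W. ?e x z"
  let ?SD = "\<lambda>z. \<Sum>x\<in>W - Nb y. ?e x z"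
  have "lift y (psub (\<lambda>z. \<Sum>x\<in>N' y. pgen (v, x) z) pone)
      = psub (\<lambda>z. \<Sum>x'\<in>N' y. pgen (Some v, tau_inv y x') z) pone"
    by (simp add: lift_def psubst_psub psubst_sum sum_nc psubst_pgen psubst_pone lift_gen_def)
  also have "(\<lambda>z. \<Sum>x'\<in>N' y. pgen (Some v, tau_inv y x') z) = ?SN"
    by (rule ext, rule sum.reindex_bij_betw[OF tau_inv_bij[OF y], of "\<lambda>x. ?e x _"])
  also have "psub ?SN pone = psub (psub ?SW pone) ?SD"
  proof (rule ext)
    fix z
    have "?SW z = ?SD z + ?SN z" by (rule sum.subset_diff[OF Nb_subset finite_W])
    then show "psub ?SN pone z = psub (psub ?SW pone) ?SD z" by (simp add: psub_def)
  qed
  finally have "pmul (proj y) (lift y (psub (\<lambda>z. \<Sum>x\<in>N' y. pgen (v, x) z) pone))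
      = psub (pmul (proj y) (psub ?SW pone)) (pmul (proj y) ?SD)"
    by (simp add: pmul_psub_right)
  moreover have "pmul (proj y) (psub ?SW pone) \<in> IA"
    using v yW by (intro ideal_gen_pmul_left proj_nc ideal_gen_rel lc_rel_partition) (auto simp: susp_V_iff)
  moreover have "pmul (proj y) ?SD \<in> IA"
  proof -
    have "pmul (proj y) (?e x) \<in> IA" if "x \<in> W - Nb y" for x
      using that v yW unfolding proj_def
      by (intro ideal_gen_rel lc_rel_nonadjacent) (auto simp: susp_V_iff susp_E_simps Nb_iff)
    then show ?thesis unfolding pmul_sum_right by (rule ideal_gen_sum)
  qed
  ultimately show ?thesis by (simp add: ideal_gen_psub)
qed

lemma proj_lift_rel: assumes y: "y \<in> T" and r: "r \<in> RB y" shows "pmul (proj y) (lift y r) \<in> IA"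
  using r
proof (cases rule: lc_rels_cases)
  case (partition v)
  then show ?thesis using y by (simp add: proj_lift_partition_rel)
next
  case (idempotent v x)
  then show ?thesis using y T_subset tau_inv_in[OF y] Nb_subset
    by (simp add: lift_def psubst_psub psubst_pmul pmul_nc psubst_pgen lift_gen_def)
       (intro ideal_gen_pmul_left proj_nc ideal_gen_rel lc_rel_idempotent, auto simp: susp_V_iff)
next
  case (orthogonal v x1 x2)
  have "tau_inv y x1 \<noteq> tau_inv y x2" using orthogonal tau_tau_inv[OF y] by metis
  then show ?thesis using orthogonal y T_subset tau_inv_in[OF y] Nb_subset
    by (simp add: lift_def psubst_pmul psubst_pgen lift_gen_def)
       (intro ideal_gen_pmul_left proj_nc ideal_gen_rel lc_rel_orthogonal, auto simp: susp_V_iff)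
next
  case (nonadjacent v w x1 x2)
  have i1: "tau_inv y x1 \<in> Nb y" "tau_inv y x2 \<in> Nb y" using nonadjacent tau_inv_in[OF y] by auto
  have "\<not> F (tau_inv y x1) (tau_inv y x2)" using relabel_adj[OF y i1] nonadjacent tau_tau_inv[OF y] by simp
  then show ?thesis using nonadjacent y T_subset i1 Nb_subset
    by (simp add: lift_def psubst_pmul psubst_pgen lift_gen_def)
       (intro ideal_gen_pmul_left proj_nc ideal_gen_rel lc_rel_nonadjacent, auto simp: susp_V_iff susp_E_simps)
next
  case (commute v w x1 x2)
  have i1: "tau_inv y x1 \<in> Nb y" "tau_inv y x2 \<in> Nb y" using commute tau_inv_in[OF y] by auto
  then show ?thesis using commute y T_subset Nb_subset
    by (simp add: lift_def psubst_psub psubst_pmul pmul_nc psubst_pgen lift_gen_def)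
       (intro ideal_gen_pmul_left proj_nc ideal_gen_rel lc_rel_commute, auto simp: susp_V_iff susp_E_simps)
qed

lemma proj_lift_ideal: assumes y: "y \<in> T" and q: "q \<in> IB y" shows "pmul (proj y) (lift y q) \<in> IA"
  using q
proof (induction rule: ideal_gen.induct)
  case zero then show ?case by (simp add: lift_def ideal_gen.zero)
next
  case (gen r a b)
  have yW: "y \<in> W" using y T_subset by blast
  have rn: "r \<in> nc_polys (GB y)" using gen lc_rels_nc by blast
  have fin: "finite_poly a" "finite_poly b" "finite_poly r" using gen rn by (simp_all add: finite_poly_nc)
  have e: "lift y (pmul (pmul a r) b) = pmul (pmul (lift y a) (lift y r)) (lift y b)"
    using fin by (simp add: lift_def psubst_pmul pmul_nc)
  have an: "lift y a \<in> nc_polys GA" "lift y b \<in> nc_polys GA" "lift y r \<in> nc_polys GA"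
    using gen rn y by (simp_all add: lift_nc)
  have c1: "pcongA (pmul (proj y) (lift y a)) (pmul (lift y a) (proj y))"
    using proj_commute[OF yW lift_nc_GV[OF y]] gen by simp
  have "pcongA (pmul (pmul (proj y) (lift y a)) (pmul (lift y r) (lift y b)))
            (pmul (pmul (lift y a) (proj y)) (pmul (lift y r) (lift y b)))"
    using c1 an by (intro pcong_pmul_right pmul_nc)
  moreover have "pmul (pmul (lift y a) (proj y)) (pmul (lift y r) (lift y b)) \<in> IA"
  proof -
    have "pmul (pmul (lift y a) (pmul (proj y) (lift y r))) (lift y b) \<in> IA"
      by (rule ideal_gen_pmul_right[OF an(2)], rule ideal_gen_pmul_left[OF an(1)], rule proj_lift_rel[OF y gen(1)])
    then show ?thesis by (simp add: pmul_assoc)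
  qed
  ultimately show ?case using e by (simp add: pmul_assoc pcong_ideal_gen)
next
  case (add p q)
  have "finite_poly p" "finite_poly q" using add ideal_gen_nc[OF lc_rels_nc] finite_poly_nc by blast+
  then show ?case using add by (simp add: lift_def psubst_padd pmul_padd_right ideal_gen.add)
qed

lemma recomb_ideal: "(\<And>y. y \<in> T \<Longrightarrow> f y \<in> IB y) \<Longrightarrow> recomb f \<in> IA"
  unfolding recomb_def by (intro ideal_gen_sum proj_lift_ideal)

lemma proj_isolated: assumes yW: "y \<in> W" and yn: "y \<notin> non_isolated W F" shows "proj y \<in> IA"
proof -
  obtain v0 where v0: "v0 \<in> V" using G_nonempty by blast
  have nF: "\<not> F y x" for x using yW yn by (auto simp: non_isolated_def)
  let ?S = "\<lambda>z. \<Sum>x\<in>W. pgen (Some v0, x) z"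
  have "pcongA ?S pone" unfolding pcong_def using v0 by (intro ideal_gen_rel lc_rel_partition) (simp add: susp_V_iff)
  then have c: "pcongA (pmul (proj y) ?S) (proj y)" using proj_nc[OF yW] pcong_pmul_left by fastforce
  have "pmul (proj y) (pgen (Some v0, x)) \<in> IA" if "x \<in> W" for x
    unfolding proj_def using that yW v0 nF by (intro ideal_gen_rel lc_rel_nonadjacent) (auto simp: susp_V_iff susp_E_simps)
  then have "pmul (proj y) ?S \<in> IA" unfolding pmul_sum_right by (rule ideal_gen_sum)
  then show ?thesis using c pcong_sym pcong_ideal_gen by blast
qed

definition corner_gen :: "'b \<Rightarrow> 'a option \<times> 'b \<Rightarrow> ('a option \<times> 'b) ncpoly" where
  "corner_gen y a = lift y (restr_gen y a)"

lemma corner_gen_None: "corner_gen y (None, x) = (if x = y then pone else pzero)"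
  by (simp add: corner_gen_def restr_gen_None lift_def psubst_pone)
lemma corner_gen_Some: "y \<in> T \<Longrightarrow> corner_gen y (Some v, x) = (if x \<in> Nb y then pgen (Some v, x) else pzero)"
  using lift_pgen[of y v] tau_inv_tau[of y x] by (simp add: corner_gen_def restr_gen_Some lift_def)

lemma corner_gen_nc: "y \<in> T \<Longrightarrow> a \<in> GA \<Longrightarrow> corner_gen y a \<in> nc_polys GA"
  using Nb_subset by (cases a; cases "fst a") (auto simp: corner_gen_None corner_gen_Some pgen_nc)

lemma proj_corner_gen:
  assumes y: "y \<in> T" and a: "a \<in> GA"
  shows "pcongA (pmul (proj y) (corner_gen y a)) (pmul (proj y) (pgen a))"
proof -
  have yW: "y \<in> W" using y T_subset by blast
  obtain b x where ab: "a = (b, x)" by fastforce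
  show ?thesis
  proof (cases b)
    case None
    show ?thesis
    proof (cases "x = y")
      case True
      have "psub (pmul (proj y) (proj y)) (proj y) \<in> IA" unfolding proj_def
        using yW by (intro ideal_gen_rel lc_rel_idempotent) (simp_all add: susp_V_iff)
      then show ?thesis using ab None True pcong_sym by (simp add: pcong_def corner_gen_None proj_def)
    next
      case False
      have "pmul (proj y) (pgen (None, x)) \<in> IA" unfolding proj_def
        using yW a ab False by (intro ideal_gen_rel lc_rel_orthogonal) (auto simp: susp_V_iff)
      then show ?thesis using ab None False pcong_sym pcong_zero_iff by (fastforce simp: corner_gen_None)
    qed
  next
    case (Some v)
    show ?thesis
    proof (cases "x \<in> Nb y")
      case False
      have "pmul (proj y) (pgen (Some v, x)) \<in> IA" unfolding proj_def
        using yW a ab Some False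
        by (intro ideal_gen_rel lc_rel_nonadjacent) (auto simp: susp_V_iff susp_E_simps Nb_iff)
      then show ?thesis using ab Some False pcong_sym pcong_zero_iff by (fastforce simp: corner_gen_Some[OF y])
    qed (use ab Some y in \<open>simp add: corner_gen_Some pcong_refl\<close>)
  qed
qed

lemma proj_commute_corner_gen:
  assumes y: "y \<in> T" and a: "a \<in> GA"
  shows "pcongA (pmul (proj y) (corner_gen y a)) (pmul (corner_gen y a) (proj y))"
proof -
  have yW: "y \<in> W" using y T_subset by blast
  obtain b x where ab: "a = (b, x)" by fastforce
  show ?thesis
  proof (cases "\<exists>v. b = Some v \<and> x \<in> Nb y")
    case True
    then obtain v where "b = Some v" "x \<in> Nb y" by blast
    moreover have "(Some v, x) \<in> GV" using a ab calculation Nb_subset by (auto simp: susp_V_def)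
    ultimately show ?thesis using ab y proj_commute_pgen[OF yW] by (simp add: corner_gen_Some)
  next
    case False
    then show ?thesis using ab y
      by (cases b) (auto simp: corner_gen_None corner_gen_Some pcong_refl)
  qed
qed

lemma proj_lift_restr:
  assumes y: "y \<in> T" and d: "d \<in> nc_polys GA"
  shows "pcongA (pmul (proj y) (lift y (restr y d))) (pmul (proj y) d)"
proof -
  have "lift y (restr y d) = psubst (corner_gen y) d"
    unfolding lift_def restr_def corner_gen_def using finite_poly_nc[OF d] finite_poly_restr_gen
    by (simp add: psubst_psubst)
  moreover have "y \<in> W" using y T_subset by blast
  ultimately show ?thesis
    using pcong_corner[OF proj_nc corner_gen_nc proj_corner_gen proj_commute_corner_gen d] y by simp
qed

\<comment> \<open>1 = \<Sum>_{y\<in>W} p_y, and the terms with y \<notin> T vanish because such y are isolated.\<close>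
lemma recomb_decomp: assumes d: "d \<in> nc_polys GA" shows "pcongA (recomb (decomp d)) d"
proof -
  let ?ST = "\<lambda>w. \<Sum>y\<in>T. pmul (proj y) d w"
  let ?SW = "\<lambda>w. \<Sum>y\<in>W. pmul (proj y) d w"
  let ?SD = "\<lambda>w. \<Sum>y\<in>W - T. pmul (proj y) d w"
  have "recomb (decomp d) = (\<lambda>w. \<Sum>y\<in>T. pmul (proj y) (lift y (restr y d)) w)"
    unfolding recomb_def decomp_def by (rule ext, rule sum.cong) auto
  moreover have "pcongA (\<lambda>w. \<Sum>y\<in>T. pmul (proj y) (lift y (restr y d)) w) ?ST"
    using proj_lift_restr d by (intro pcong_sum) auto
  ultimately have c1: "pcongA (recomb (decomp d)) ?ST" by simp
  have SD: "?SD \<in> IA"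
  proof (rule ideal_gen_sum)
    fix y assume "y \<in> W - T"
    then have "proj y \<in> IA" using proj_isolated non_isolated_subset_T by blast
    then show "pmul (proj y) d \<in> IA" using d by (rule_tac ideal_gen_pmul_right)
  qed
  have "psub ?ST ?SW = psmul (-1) ?SD"
  proof (rule ext)
    fix w
    have "?SW w = ?SD w + ?ST w" by (rule sum.subset_diff[OF T_subset finite_W])
    then show "psub ?ST ?SW w = psmul (-1) ?SD w" by (simp add: psub_def psmul_def)
  qed
  then have c2: "pcongA ?ST ?SW" using SD by (simp add: pcong_def ideal_gen_psmul)
  have "pcongA (\<lambda>w. \<Sum>y\<in>W. proj y w) pone"
    unfolding pcong_def proj_def by (intro ideal_gen_rel lc_rel_partition) (simp add: susp_V_iff)
  then have "pcongA (pmul (\<lambda>w. \<Sum>y\<in>W. proj y w) d) (pmul pone d)" using d by (rule_tac pcong_pmul_right)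
  then have c3: "pcongA ?SW d" by (simp add: pmul_sum_left)
  show ?thesis using c1 c2 c3 pcong_trans by blast
qed

lemma restr_lift: assumes y: "y \<in> T" and q: "q \<in> nc_polys (GB y)" shows "restr y (lift y q) = q"
proof -
  have "restr y (lift y q) = psubst (\<lambda>a. restr y (lift_gen y a)) q"
    unfolding lift_def restr_def using finite_poly_nc[OF q] finite_poly_lift_gen by (simp add: psubst_psubst)
  also have "\<dots> = psubst pgen q"
  proof (rule psubst_cong[OF q])
    fix a assume a: "a \<in> GB y"
    then obtain v x where ax: "a = (v, x)" "x \<in> N' y" by auto
    show "restr y (lift_gen y a) = pgen a"
      using ax tau_inv_in[OF y ax(2)] tau_tau_inv[OF y ax(2)] by (simp add: lift_gen_def restr_pgen restr_gen_Some)
  qed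
  also have "\<dots> = q" using finite_poly_nc[OF q] by (rule psubst_pgen_id)
  finally show ?thesis .
qed

lemma restr_recomb: assumes f: "\<And>y. y \<in> T \<Longrightarrow> f y \<in> nc_polys (GB y)" and y0: "y0 \<in> T"
  shows "restr y0 (recomb f) = f y0"
proof -
  have fsy: "finite_poly (pmul (proj y) (lift y (f y)))" if "y \<in> T" for y
    using that T_subset f by (intro finite_poly_nc[of _ GA] pmul_nc proj_nc lift_nc) auto
  have "restr y0 (recomb f) = (\<lambda>z. \<Sum>y\<in>T. restr y0 (pmul (proj y) (lift y (f y))) z)"
    unfolding recomb_def restr_def using fsy by (simp add: psubst_sum)
  also have "\<dots> = (\<lambda>z. \<Sum>y\<in>T. if y = y0 then f y0 z else 0)"
  proof (rule ext, rule sum.cong)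
    fix z y assume y: "y \<in> T"
    have "finite_poly (lift y (f y))" using y f by (intro finite_poly_nc[of _ GA] lift_nc) auto
    then have "restr y0 (pmul (proj y) (lift y (f y))) = pmul (restr_gen y0 (None, y)) (restr y0 (lift y (f y)))"
      unfolding restr_def proj_def by (simp add: psubst_pmul psubst_pgen)
    then show "restr y0 (pmul (proj y) (lift y (f y))) z = (if y = y0 then f y0 z else 0)"
      using restr_lift[OF y0 f[OF y0]] by (simp add: restr_gen_None)
  qed simp
  also have "\<dots> = f y0" using finite_T y0 by simp
  finally show ?thesis .
qed

lemma dsum_idl_iff: "(qsub (dsum T (\<lambda>y. A_lc V E (N' y) (F' y))) f f' \<in> idl (dsum T (\<lambda>y. A_lc V E (N' y) (F' y))))
   \<longleftrightarrow> (\<forall>y\<in>T. psub (f y) (f' y) \<in> IB y)"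
  by (simp add: dsum_qsub_idl A_lc_def qsub_presented idl_presented)

lemma decomp_inj: assumes an: "a \<in> nc_polys GA" "b \<in> nc_polys GA"
  shows "psub a b \<in> IA \<longleftrightarrow> (\<forall>y\<in>T. psub (decomp a y) (decomp b y) \<in> IB y)"
proof -
  have dn: "psub a b \<in> nc_polys GA" using an by (rule psub_nc)
  have ps: "psub (decomp a y) (decomp b y) = restr y (psub a b)" if "y \<in> T" for y
  proof -
    have "psub (decomp a y) (decomp b y) = psub (restr y a) (restr y b)" using that by (simp add: decomp_def)
    also have "\<dots> = restr y (psub a b)" unfolding restr_def
      by (rule psubst_psub[symmetric]) (rule finite_poly_nc, fact)+
    finally show ?thesis .
  qed
  show ?thesis
  proof
    assume "psub a b \<in> IA"
    then show "\<forall>y\<in>T. psub (decomp a y) (decomp b y) \<in> IB y" using ps restr_ideal by simp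
  next
    assume h: "\<forall>y\<in>T. psub (decomp a y) (decomp b y) \<in> IB y"
    have "recomb (decomp (psub a b)) \<in> IA"
    proof (rule recomb_ideal)
      fix y assume y: "y \<in> T"
      have "decomp (psub a b) y = psub (decomp a y) (decomp b y)" using ps[OF y] y by (simp add: decomp_def)
      then show "decomp (psub a b) y \<in> IB y" using h y by simp
    qed
    then show "psub a b \<in> IA" using recomb_decomp[OF dn] pcong_sym pcong_ideal_gen by blast
  qed
qed

lemma recomb_nc: "(\<And>y. y \<in> T \<Longrightarrow> f y \<in> nc_polys (GB y)) \<Longrightarrow> recomb f \<in> nc_polys GA"
  unfolding recomb_def using T_subset by (intro sum_nc pmul_nc proj_nc lift_nc) auto

lemma qalg_iso_decomp: "qalg_iso (A_lc (susp_V V) (susp_E V E) W F) (dsum T (\<lambda>y. A_lc V E (N' y) (F' y)))"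
proof -
  let ?A = "A_lc (susp_V V) (susp_E V E) W F"
  let ?B = "dsum T (\<lambda>y. A_lc V E (N' y) (F' y))"
  have A: "carr ?A = nc_polys GA" "idl ?A = IA" "plus ?A = padd" "mult ?A = pmul" "scal ?A = psmul"
    "unit ?A = pone" "\<And>a b. qsub ?A a b = psub a b"
    by (simp_all add: A_lc_def presented_def qsub_presented[unfolded presented_def])
  have B: "carr ?B = {f. (\<forall>y\<in>T. f y \<in> nc_polys (GB y)) \<and> (\<forall>y. y \<notin> T \<longrightarrow> f y = undefined)}"
    "\<And>f f' y. y \<in> T \<Longrightarrow> plus ?B f f' y = padd (f y) (f' y)"
    "\<And>f f' y. y \<in> T \<Longrightarrow> mult ?B f f' y = pmul (f y) (f' y)"
    "\<And>c f y. y \<in> T \<Longrightarrow> scal ?B c f y = psmul c (f y)"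
    "\<And>y. y \<in> T \<Longrightarrow> unit ?B y = pone"
    by (simp_all add: dsum_def A_lc_def presented_def)
  have decomp_T: "\<And>a y. y \<in> T \<Longrightarrow> decomp a y = restr y a" by (simp add: decomp_def)
  note hom_simps = A B decomp_T restr_def finite_poly_nc[of _ GA] ideal_gen.zero
  show ?thesis unfolding qalg_iso_def
  proof (rule exI[of _ decomp], intro conjI ballI allI)
    fix a assume "a \<in> carr ?A"
    then show "decomp a \<in> carr ?B" unfolding A B by (auto simp: decomp_def restr_nc)
  next
    fix a b assume "a \<in> carr ?A" "b \<in> carr ?A"
    then show "qsub ?A a b \<in> idl ?A \<longleftrightarrow> qsub ?B (decomp a) (decomp b) \<in> idl ?B"
      unfolding A dsum_idl_iff by (rule decomp_inj)
  next
    fix f assume "f \<in> carr ?B"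
    then have f: "\<And>y. y \<in> T \<Longrightarrow> f y \<in> nc_polys (GB y)" unfolding B by blast
    have "qsub ?B (decomp (recomb f)) f \<in> idl ?B"
      unfolding dsum_idl_iff using restr_recomb[OF f] by (simp add: decomp_T ideal_gen.zero)
    then show "\<exists>a\<in>carr ?A. qsub ?B (decomp a) f \<in> idl ?B" using recomb_nc[OF f] unfolding A by blast
  next
    fix a b assume "a \<in> carr ?A" "b \<in> carr ?A"
    then show "qsub ?B (decomp (plus ?A a b)) (plus ?B (decomp a) (decomp b)) \<in> idl ?B"
      and "qsub ?B (decomp (mult ?A a b)) (mult ?B (decomp a) (decomp b)) \<in> idl ?B"
      unfolding dsum_idl_iff by (simp_all add: hom_simps psubst_padd psubst_pmul)
  next
    fix c a assume "a \<in> carr ?A"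
    then show "qsub ?B (decomp (scal ?A c a)) (scal ?B c (decomp a)) \<in> idl ?B"
      unfolding dsum_idl_iff by (simp add: hom_simps psubst_psmul)
  next
    show "qsub ?B (decomp (unit ?A)) (unit ?B) \<in> idl ?B"
      unfolding dsum_idl_iff by (simp add: hom_simps psubst_pone)
  qed
qed

end

lemma automorphism_bij_nbhd:
  assumes s: "bij_betw s W W" and pres: "\<forall>a\<in>W. \<forall>b\<in>W. F a b \<longleftrightarrow> F (s a) (s b)"
    and y: "y \<in> W" and sy: "s y = y0"
  shows "bij_betw s (nbhd_V W F y) (nbhd_V W F y0)"
proof (rule bij_betw_subset[OF s])
  show "nbhd_V W F y \<subseteq> W" by (auto simp: nbhd_V_def)
  show "s ` nbhd_V W F y = nbhd_V W F y0"
  proof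
    show "s ` nbhd_V W F y \<subseteq> nbhd_V W F y0"
    proof
      fix z assume "z \<in> s ` nbhd_V W F y"
      then obtain x where x: "x \<in> W" "F y x" "z = s x" by (auto simp: nbhd_V_def)
      then have "F y0 z" using pres y sy by auto
      moreover have "z \<in> W" using x s by (auto simp: bij_betw_def)
      ultimately show "z \<in> nbhd_V W F y0" by (simp add: nbhd_V_def)
    qed
  next
    show "nbhd_V W F y0 \<subseteq> s ` nbhd_V W F y"
    proof
      fix z assume "z \<in> nbhd_V W F y0"
      then have z: "z \<in> W" "F y0 z" by (auto simp: nbhd_V_def)
      then obtain x where x: "x \<in> W" "z = s x" using s by (auto simp: bij_betw_def)
      then have "F y x" using pres y sy z by auto
      then show "z \<in> s ` nbhd_V W F y" using x by (auto simp: nbhd_V_def)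
    qed
  qed
qed

lemma susp_decomp_non_isolated:
  assumes "graph V E" and "V \<noteq> {}" and "graph W F"
  shows "susp_decomp V E W F (non_isolated W F) (nbhd_V W F) (nbhd_E W F) (\<lambda>y. id)"
proof
  fix y x1 x2
  assume "x1 \<in> nbhd_V W F y" "x2 \<in> nbhd_V W F y"
  then show "F x1 x2 \<longleftrightarrow> nbhd_E W F y (id x1) (id x2)" by (simp add: nbhd_E_def)
qed (use assms in \<open>auto simp: non_isolated_def\<close>)

lemma susp_decomp_vertex_transitive:
  assumes "graph V E" and "V \<noteq> {}" and "graph W F"
    and vt: "vertex_transitive W F" and y0: "y0 \<in> W"
  obtains \<sigma> where "susp_decomp V E W F W (\<lambda>_. nbhd_V W F y0) (\<lambda>_. nbhd_E W F y0) \<sigma>"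
proof
  define \<sigma> where "\<sigma> y = (SOME s. bij_betw s W W \<and> (\<forall>a\<in>W. \<forall>b\<in>W. F a b \<longleftrightarrow> F (s a) (s b)) \<and> s y = y0)" for y
  have \<sigma>: "bij_betw (\<sigma> y) W W \<and> (\<forall>a\<in>W. \<forall>b\<in>W. F a b \<longleftrightarrow> F (\<sigma> y a) (\<sigma> y b)) \<and> \<sigma> y y = y0"
    if "y \<in> W" for y
  proof -
    have "\<exists>s. bij_betw s W W \<and> (\<forall>a\<in>W. \<forall>b\<in>W. F a b \<longleftrightarrow> F (s a) (s b)) \<and> s y = y0"
      using vt that y0 unfolding vertex_transitive_def by blast
    then show ?thesis unfolding \<sigma>_def by (rule someI_ex)
  qed
  show "susp_decomp V E W F W (\<lambda>_. nbhd_V W F y0) (\<lambda>_. nbhd_E W F y0) \<sigma>"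
  proof
    fix y assume y: "y \<in> W"
    show nbhd_bij: "bij_betw (\<sigma> y) (nbhd_V W F y) (nbhd_V W F y0)"
      using \<sigma>[OF y] y by (intro automorphism_bij_nbhd) auto
    fix x1 x2
    assume x: "x1 \<in> nbhd_V W F y" "x2 \<in> nbhd_V W F y"
    then have "\<sigma> y x1 \<in> nbhd_V W F y0" "\<sigma> y x2 \<in> nbhd_V W F y0"
      using nbhd_bij by (meson bij_betwE)+
    moreover have "x1 \<in> W" "x2 \<in> W" using x by (auto simp: nbhd_V_def)
    ultimately show "F x1 x2 \<longleftrightarrow> nbhd_E W F y0 (\<sigma> y x1) (\<sigma> y x2)"
      using \<sigma>[OF y] by (simp add: nbhd_E_def)
  qed (use assms in \<open>auto simp: non_isolated_def\<close>)
qed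

theorem mainTheorem20:
  fixes V :: "'a set" and E :: "'a \<Rightarrow> 'a \<Rightarrow> bool"
    and W :: "'b set" and F :: "'b \<Rightarrow> 'b \<Rightarrow> bool"
  assumes "graph V E" and "V \<noteq> {}" and "graph W F"
  shows "qalg_iso (A_lc (susp_V V) (susp_E V E) W F)
           (dsum (non_isolated W F) (\<lambda>y. A_lc V E (nbhd_V W F y) (nbhd_E W F y)))
     \<and> (vertex_transitive W F \<longrightarrow>
          (\<forall>y\<in>W. qalg_iso (A_lc (susp_V V) (susp_E V E) W F)
                    (dsum W (\<lambda>_. A_lc V E (nbhd_V W F y) (nbhd_E W F y)))))"
proof (intro conjI impI ballI)
  show "qalg_iso (A_lc (susp_V V) (susp_E V E) W F)
           (dsum (non_isolated W F) (\<lambda>y. A_lc V E (nbhd_V W F y) (nbhd_E W F y)))"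
    using susp_decomp_non_isolated[OF assms] by (rule susp_decomp.qalg_iso_decomp)
next
  fix y assume "vertex_transitive W F" "y \<in> W"
  then obtain \<sigma> where "susp_decomp V E W F W (\<lambda>_. nbhd_V W F y) (\<lambda>_. nbhd_E W F y) \<sigma>"
    using susp_decomp_vertex_transitive[OF assms] by blast
  then show "qalg_iso (A_lc (susp_V V) (susp_E V E) W F)
                    (dsum W (\<lambda>_. A_lc V E (nbhd_V W F y) (nbhd_E W F y)))"
    by (rule susp_decomp.qalg_iso_decomp)
qed

end
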